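(* Let $E$ be a finite graph, let $R$ be a unital subring of $\mathbb C$ closed under complex conjugation that has an essentially unique partition of the unit, and let $u\in L_R(E)$ be a unitary ($uu^*=u^*u=1$). Then there exist paths $\alpha_1,\dots,\alpha_n,\beta_1,\dots,\beta_n\in E^*$ and $\lambda_1,\dots,\lambda_n\in R$ such that $u=\sum_{i=1}^n\lambda_i\alpha_i\beta_i^*$, $\sum_{i=1}^n\alpha_i\alpha_i^*=1$, $\sum_{i=1}^n\beta_i\beta_i^*=1$, and $|\lambda_i|=1$ for all $i$.
   Context: A unital subring $R\subseteq\mathbb C$ (containing $1$) closed under complex conjugation has an essentially unique partition of the unit if whenever $\lambda_1,\dots,\lambda_n\in R$ satisfy $\sum_{i=1}^n|\lambda_i|^2=1$, all but one of the $\lambda_i$ are zero. A graph $E=(E^0,E^1,r,s)$ has vertices $E^0$, edges $E^1$, and range and source maps $r,s$. A path is a word $e_1\cdots e_n$ with $r(e_i)=s(e_{i+1})$; vertices are paths of length $0$; $E^*$ is the set of finite paths. The Leavitt path algebra $L_R(E)$ is the universal $R$-algebra generated by pairwise orthogonal idempotents $\{v\}_{v\in E^0}$ and $\{e,e^*\}_{e\in E^1}$ with: $e^*f=0$ for $e\ne f$; $e^*e=r(e)$; $s(e)e=e=er(e)$; $e^*s(e)=e^*=r(e)e^*$; and $v=\sum_{e\in s^{-1}(v)}ee^*$ whenever $s^{-1}(v)$ is finite and nonempty. For $\alpha=e_1\cdots e_n$ put $\alpha^*=e_n^*\cdots e_1^*$. $L_R(E)$ carries the conjugate-linear involution $(\lambda\alpha\beta^*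 )^*=\overline\lambda\beta\alpha^*$, and for finite $E$, $1=\sum_{v\in E^0}v$. *)

theory Defs
  imports Complex_Main
begin

definition conj_subring :: "complex set \<Rightarrow> bool" where
  "conj_subring R \<longleftrightarrow> 0 \<in> R \<and> 1 \<in> R \<and>
     (\<forall>x\<in>R. \<forall>y\<in>R. x + y \<in> R \<and> x - y \<in> R \<and> x * y \<in> R) \<and>
     (\<forall>x\<in>R. cnj x \<in> R)"

definition ess_unique_partition_of_unit :: "complex set \<Rightarrow> bool" where
  "ess_unique_partition_of_unit R \<longleftrightarrow>
     (\<forall>(n::nat) (l::nat \<Rightarrow> complex). (\<forall>i<n. l i \<in> R) \<longrightarrow>
        (\<Sum>i<n. (cmod (l i))\<^sup>2) = 1 \<longrightarrow>
        (\<exists>j<n. \<forall>i<n. i \<noteq> j \<longrightarrow> l i = 0))"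

definition graph :: "'v set \<Rightarrow> 'e set \<Rightarrow> ('e \<Rightarrow> 'v) \<Rightarrow> ('e \<Rightarrow> 'v) \<Rightarrow> bool" where
  "graph E0 E1 r s \<longleftrightarrow> (\<forall>e\<in>E1. r e \<in> E0 \<and> s e \<in> E0)"

definition finite_graph :: "'v set \<Rightarrow> 'e set \<Rightarrow> ('e \<Rightarrow> 'v) \<Rightarrow> ('e \<Rightarrow> 'v) \<Rightarrow> bool" where
  "finite_graph E0 E1 r s \<longleftrightarrow> graph E0 E1 r s \<and> finite E0 \<and> finite E1"

text \<open>Finite paths: a pair (v, es). If es = [] this is the vertex v (a path of length 0);
  otherwise it is the edge word es, and v = s (hd es).\<close>
type_synonym ('v,'e) path = "'v \<times> 'e list"

fun edge_chain :: "('e \<Rightarrow> 'v) \<Rightarrow> ('e \<Rightarrow> 'v) \<Rightarrow> 'e list \<Rightarrow> bool" where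
  "edge_chain r s [] = True"
| "edge_chain r s [e] = True"
| "edge_chain r s (e # f # es) = (r e = s f \<and> edge_chain r s (f # es))"

definition paths :: "'v set \<Rightarrow> 'e set \<Rightarrow> ('e \<Rightarrow> 'v) \<Rightarrow> ('e \<Rightarrow> 'v) \<Rightarrow> ('v,'e) path set" where
  "paths E0 E1 r s = {(v, es). v \<in> E0 \<and> set es \<subseteq> E1 \<and>
      (es \<noteq> [] \<longrightarrow> s (hd es) = v) \<and> edge_chain r s es}"

datatype ('v,'e) gen = Vx 'v | Ed 'e | Gh 'e

type_synonym ('v,'e) fa = "('v,'e) gen list \<Rightarrow> complex"

definition gens :: "'v set \<Rightarrow> 'e set \<Rightarrow> ('v,'e) gen set" where
  "gens E0 E1 = Vx ` E0 \<union> Ed ` E1 \<union> Gh ` E1"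

text \<open>Elements of the free non-unital R-algebra on the generators: finitely supported
  R-valued coefficient functions on nonempty words in the generators.\<close>
definition free_alg :: "complex set \<Rightarrow> 'v set \<Rightarrow> 'e set \<Rightarrow> ('v,'e) fa set" where
  "free_alg R E0 E1 = {p. finite {w. p w \<noteq> 0} \<and> (\<forall>w. p w \<in> R) \<and> p [] = 0 \<and>
      (\<forall>w. p w \<noteq> 0 \<longrightarrow> set w \<subseteq> gens E0 E1)}"

definition mono :: "('v,'e) gen list \<Rightarrow> ('v,'e) fa" where
  "mono w = (\<lambda>x. if x = w then 1 else 0)"

definition fadd :: "('v,'e) fa \<Rightarrow> ('v,'e) fa \<Rightarrow> ('v,'e) fa" where
  "fadd p q = (\<lambda>w. p w + q w)"

definition fdiff :: "('v,'e) fa \<Rightarrow> ('v,'e) fa \<Rightarrow> ('v,'e) fa" where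
  "fdiff p q = (\<lambda>w. p w - q w)"

definition fsmult :: "complex \<Rightarrow> ('v,'e) fa \<Rightarrow> ('v,'e) fa" where
  "fsmult c p = (\<lambda>w. c * p w)"

definition fsum :: "('i \<Rightarrow> ('v,'e) fa) \<Rightarrow> 'i set \<Rightarrow> ('v,'e) fa" where
  "fsum f A = (\<lambda>w. \<Sum>i\<in>A. f i w)"

text \<open>Multiplication = concatenation of words, extended bilinearly.\<close>
definition fmult :: "('v,'e) fa \<Rightarrow> ('v,'e) fa \<Rightarrow> ('v,'e) fa" where
  "fmult p q = (\<lambda>w. \<Sum>i\<le>length w. p (take i w) * q (drop i w))"

fun gstar :: "('v,'e) gen \<Rightarrow> ('v,'e) gen" where
  "gstar (Vx v) = Vx v"
| "gstar (Ed e) = Gh e"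
| "gstar (Gh e) = Ed e"

definition fstar :: "('v,'e) fa \<Rightarrow> ('v,'e) fa" where
  "fstar p = (\<lambda>w. cnj (p (rev (map gstar w))))"

text \<open>The defining relations of L_R(E), each written as an element (LHS - RHS).\<close>
definition lpa_relations ::
  "'v set \<Rightarrow> 'e set \<Rightarrow> ('e \<Rightarrow> 'v) \<Rightarrow> ('e \<Rightarrow> 'v) \<Rightarrow> ('v,'e) fa set" where
  "lpa_relations E0 E1 r s =
     {mono [Vx v, Vx w] | v w. v \<in> E0 \<and> w \<in> E0 \<and> v \<noteq> w}
   \<union> {fdiff (mono [Vx v, Vx v]) (mono [Vx v]) | v. v \<in> E0}
   \<union> {mono [Gh e, Ed f] | e f. e \<in> E1 \<and> f \<in> E1 \<and> e \<noteq> f}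
   \<union> {fdiff (mono [Gh e, Ed e]) (mono [Vx (r e)]) | e. e \<in> E1}
   \<union> {fdiff (mono [Vx (s e), Ed e]) (mono [Ed e]) | e. e \<in> E1}
   \<union> {fdiff (mono [Ed e, Vx (r e)]) (mono [Ed e]) | e. e \<in> E1}
   \<union> {fdiff (mono [Gh e, Vx (s e)]) (mono [Gh e]) | e. e \<in> E1}
   \<union> {fdiff (mono [Vx (r e), Gh e]) (mono [Gh e]) | e. e \<in> E1}
   \<union> {fdiff (mono [Vx v]) (fsum (\<lambda>e. mono [Ed e, Gh e]) {e \<in> E1. s e = v}) | v.
        v \<in> E0 \<and> finite {e \<in> E1. s e = v} \<and> {e \<in> E1. s e = v} \<noteq> {}}"

inductive_set lpa_ideal ::
  "complex set \<Rightarrow> 'v set \<Rightarrow> 'e set \<Rightarrow> ('e \<Rightarrow> 'v) \<Rightarrow> ('e \<Rightarrow> 'v) \<Rightarrow> ('v,'e) fa set"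
  for R E0 E1 r s where
  zero: "(\<lambda>_. 0) \<in> lpa_ideal R E0 E1 r s"
| rel: "g \<in> lpa_relations E0 E1 r s \<Longrightarrow> g \<in> lpa_ideal R E0 E1 r s"
| add: "p \<in> lpa_ideal R E0 E1 r s \<Longrightarrow> q \<in> lpa_ideal R E0 E1 r s \<Longrightarrow>
          fadd p q \<in> lpa_ideal R E0 E1 r s"
| smult: "c \<in> R \<Longrightarrow> p \<in> lpa_ideal R E0 E1 r s \<Longrightarrow> fsmult c p \<in> lpa_ideal R E0 E1 r s"
| lmult: "x \<in> gens E0 E1 \<Longrightarrow> p \<in> lpa_ideal R E0 E1 r s \<Longrightarrow>
          fmult (mono [x]) p \<in> lpa_ideal R E0 E1 r s"
| rmult: "x \<in> gens E0 E1 \<Longrightarrow> p \<in> lpa_ideal R E0 E1 r s \<Longrightarrow>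
          fmult p (mono [x]) \<in> lpa_ideal R E0 E1 r s"

definition lpa_eq ::
  "complex set \<Rightarrow> 'v set \<Rightarrow> 'e set \<Rightarrow> ('e \<Rightarrow> 'v) \<Rightarrow> ('e \<Rightarrow> 'v) \<Rightarrow>
   ('v,'e) fa \<Rightarrow> ('v,'e) fa \<Rightarrow> bool" where
  "lpa_eq R E0 E1 r s p q \<longleftrightarrow> fdiff p q \<in> lpa_ideal R E0 E1 r s"

definition lpa_one :: "'v set \<Rightarrow> ('v,'e) fa" where
  "lpa_one E0 = fsum (\<lambda>v. mono [Vx v]) E0"

definition path_elt :: "('v,'e) path \<Rightarrow> ('v,'e) fa" where
  "path_elt \<alpha> = (if snd \<alpha> = [] then mono [Vx (fst \<alpha>)] else mono (map Ed (snd \<alpha>)))"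

end

theory Submission
  imports Defs
begin

text \<open>Let \<open>N\<close> exceed the length of every word occurring in \<open>u\<close>, and let \<open>B\<close> consist of the paths
  of length \<open>N\<close> together with the shorter paths ending in a sink. Repeated use of the
  Cuntz--Krieger relation gives \<open>\<Sum>\<^sub>\<beta>\<^sub>\<in>\<^sub>B \<beta> \<beta>\<^sup>* = 1\<close>. A word contains at most \<open>N\<close> ghost edges,
  so for \<open>\<beta> \<in> B\<close> every word of \<open>u\<close> times \<open>\<beta>\<close> reduces to zero or to a path ending where \<open>\<beta>\<close>
  ends, and \<open>u \<beta> = \<Sum>\<^sub>p \<mu>\<^sub>p p\<close> with distinct paths \<open>p\<close> and \<open>\<mu>\<^sub>p \<in> R\<close>. To see that only one
  \<open>\<mu>\<^sub>p\<close> survives, let \<open>L\<^sub>R(E)\<close> act on tails of paths: edges prepend, ghost edges strip.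
  This is a \<open>*\<close>-representation, so \<open>u\<^sup>* u = 1\<close> forces \<open>\<Sum> |\<mu>\<^sub>p|\<^sup>2 = 1\<close>, and the essentially
  unique partition of the unit yields \<open>u \<beta> = \<lambda>\<^sub>\<beta> \<alpha>\<^sub>\<beta>\<close> with \<open>|\<lambda>\<^sub>\<beta>| = 1\<close>. Hence
  \<open>u = \<Sum> u \<beta> \<beta>\<^sup>* = \<Sum> \<lambda>\<^sub>\<beta> \<alpha>\<^sub>\<beta> \<beta>\<^sup>*\<close> and \<open>\<Sum> \<alpha>\<^sub>\<beta> \<alpha>\<^sub>\<beta>\<^sup>* = u (\<Sum> \<beta> \<beta>\<^sup>*) u\<^sup>* = u u\<^sup>* = 1\<close>.\<close>

section \<open>Arithmetic of the free algebra\<close>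

definition fsupp :: "('v,'e) fa \<Rightarrow> ('v,'e) gen list set" where
  "fsupp p = {w. p w \<noteq> 0}"

lemma fmult_mono_left:
  "fmult (mono v) p w = (if take (length v) w = v then p (drop (length v) w) else 0)"
proof -
  have "fmult (mono v) p w =
      (\<Sum>i\<le>length w. (if i = length v \<and> take (length v) w = v then p (drop i w) else 0))"
    unfolding fmult_def mono_def by (rule sum.cong) auto
  also have "\<dots> = (if take (length v) w = v then p (drop (length v) w) else 0)"
  proof (cases "take (length v) w = v")
    case True
    then have "length (take (length v) w) = length v" by (simp only:)
    then have "length v \<le> length w" by (simp add: min_def split: if_splits)
    then show ?thesis using True by (simp add: sum.delta)
  qed simp
  finally show ?thesis .
qed

lemma fmult_mono_right:
  "fmult p (mono v) w = (if length v \<le> length w \<and> drop (length w - length v) w = v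
      then p (take (length w - length v) w) else 0)"
proof -
  have "fmult p (mono v) w = (\<Sum>i\<le>length w. (if i = length w - length v \<and> length v \<le> length w
      \<and> drop (length w - length v) w = v then p (take i w) else 0))"
    unfolding fmult_def mono_def by (rule sum.cong) auto
  also have "\<dots> = (if length v \<le> length w \<and> drop (length w - length v) w = v
      then p (take (length w - length v) w) else 0)"
    by (cases "length v \<le> length w"; cases "drop (length w - length v) w = v")
      (simp_all add: sum.delta)
  finally show ?thesis .
qed

lemma fmult_mono_mono: "fmult (mono a) (mono b) = mono (a @ b)"
proof
  fix w
  show "fmult (mono a) (mono b) w = mono (a @ b) w"
    unfolding fmult_mono_left
    by (simp add: mono_def) (metis append_eq_conv_conj append_take_drop_id)
qed

lemma fmult_fsum_left: "fmult (fsum f A) b = fsum (\<lambda>i. fmult (f i) b) A"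
  unfolding fmult_def fsum_def by (rule ext) (simp add: sum_distrib_right sum.swap[where A=A])

lemma fmult_fsum_right: "fmult b (fsum f A) = fsum (\<lambda>i. fmult b (f i)) A"
  unfolding fmult_def fsum_def by (rule ext) (simp add: sum_distrib_left sum.swap[where A=A])

lemma fmult_fsmult_left: "fmult (fsmult c a) b = fsmult c (fmult a b)"
  unfolding fmult_def fsmult_def by (rule ext) (simp add: sum_distrib_left mult.assoc)

lemma fmult_fsmult_right: "fmult a (fsmult c b) = fsmult c (fmult a b)"
  unfolding fmult_def fsmult_def by (rule ext) (simp add: sum_distrib_left mult.left_commute)

lemma fmult_fdiff_left: "fmult (fdiff a a') b = fdiff (fmult a b) (fmult a' b)"
  unfolding fmult_def fdiff_def by (rule ext) (simp add: sum_subtractf left_diff_distrib)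

lemma fmult_fdiff_right: "fmult b (fdiff a a') = fdiff (fmult b a) (fmult b a')"
  unfolding fmult_def fdiff_def by (rule ext) (simp add: sum_subtractf right_diff_distrib)

lemma fmult_zero_left: "fmult (\<lambda>_. 0) p = (\<lambda>_. 0)"
  unfolding fmult_def by simp

lemma fmult_zero_right: "fmult p (\<lambda>_. 0) = (\<lambda>_. 0)"
  unfolding fmult_def by simp

lemma fsum_monomials:
  assumes "finite S" "fsupp a \<subseteq> S"
  shows "a = fsum (\<lambda>v. fsmult (a v) (mono v)) S"
proof
  fix w
  have "fsum (\<lambda>v. fsmult (a v) (mono v)) S w = (\<Sum>v\<in>S. if v = w then a w else 0)"
    unfolding fsum_def fsmult_def mono_def by (rule sum.cong) auto
  also have "\<dots> = a w" using assms by (auto simp: sum.delta fsupp_def)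
  finally show "a w = fsum (\<lambda>v. fsmult (a v) (mono v)) S w" by simp
qed

lemma fmult_expand_left:
  assumes "finite S" "fsupp a \<subseteq> S"
  shows "fmult a b = fsum (\<lambda>v. fsmult (a v) (fmult (mono v) b)) S"
  by (subst fsum_monomials[OF assms]) (simp add: fmult_fsum_left fmult_fsmult_left)

lemma fmult_expand_right:
  assumes "finite S" "fsupp b \<subseteq> S"
  shows "fmult a b = fsum (\<lambda>v. fsmult (b v) (fmult a (mono v))) S"
  by (subst fsum_monomials[OF assms]) (simp add: fmult_fsum_right fmult_fsmult_right)

lemma take_take_eq_imp:
  "take (length v) (take i w) = v \<Longrightarrow> length v \<le> i \<and> take (length v) w = v"
proof -
  assume a: "take (length v) (take i w) = v"
  have "length (take (length v) (take i w)) = length v" using a by (simp only:)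
  then have "length v \<le> i" by (simp add: min_def split: if_splits)
  then show ?thesis using a by (simp add: min_def)
qed

lemma fmult_assoc_mono:
  fixes v :: "('v,'e) gen list" and b c :: "('v,'e) fa"
  shows "fmult (fmult (mono v) b) c = fmult (mono v) (fmult b c)"
proof
  fix w :: "('v,'e) gen list"
  let ?n = "length w" and ?m = "length v"
  show "fmult (fmult (mono v) b) c w = fmult (mono v) (fmult b c) w"
  proof (cases "take ?m w = v")
    case False
    have "fmult (fmult (mono v) b) c w = 0"
      unfolding fmult_def[of _ c] fmult_mono_left
      by (rule sum.neutral) (use False take_take_eq_imp in fastforce)
    then show ?thesis using False by (simp add: fmult_mono_left)
  next
    case True
    then have "length (take ?m w) = ?m" by (simp only:)
    then have mn: "?m \<le> ?n" by (simp add: min_def split: if_splits)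
    have "fmult (fmult (mono v) b) c w = (\<Sum>i\<in>{?m..?n}. b (drop ?m (take i w)) * c (drop i w))"
      unfolding fmult_def[of _ c] fmult_mono_left
    proof (rule sum.mono_neutral_cong_right)
      show "\<forall>i\<in>{..?n} - {?m..?n}. (if take ?m (take i w) = v then b (drop ?m (take i w)) else 0)
          * c (drop i w) = 0"
        using take_take_eq_imp by fastforce
    qed (use True in \<open>auto simp: min_def\<close>)
    also have "\<dots> = (\<Sum>k\<in>{0..?n - ?m}. b (drop ?m (take (k + ?m) w)) * c (drop (k + ?m) w))"
      using mn by (subst sum.atLeastAtMost_shift_0) (simp_all add: add.commute)
    also have "\<dots> = (\<Sum>k\<le>length (drop ?m w). b (take k (drop ?m w)) * c (drop k (drop ?m w)))"
      by (rule sum.cong) (auto simp: atMost_atLeast0 take_drop add.commute)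
    also have "\<dots> = fmult (mono v) (fmult b c) w"
      using True by (simp only: fmult_mono_left if_True) (simp add: fmult_def)
    finally show ?thesis .
  qed
qed

lemma fmult_assoc:
  assumes "finite (fsupp a)"
  shows "fmult (fmult a b) c = fmult a (fmult b c)"
proof -
  have "\<And>X. fmult a X = fsum (\<lambda>v. fsmult (a v) (fmult (mono v) X)) (fsupp a)"
    using fmult_expand_left[OF assms] by simp
  then show ?thesis
    by (simp only: fmult_fsum_left fmult_fsmult_left fmult_assoc_mono)
qed

lemma fsum_insert: "finite A \<Longrightarrow> x \<notin> A \<Longrightarrow> fsum f (insert x A) = fadd (f x) (fsum f A)"
  unfolding fsum_def fadd_def by auto

lemma fsum_fdiff: "fdiff (fsum f A) (fsum g A) = fsum (\<lambda>i. fdiff (f i) (g i)) A"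
  unfolding fsum_def fdiff_def by (rule ext) (simp add: sum_subtractf)

lemma fsum_cong: "(\<And>i. i \<in> A \<Longrightarrow> f i = g i) \<Longrightarrow> fsum f A = fsum g A"
  unfolding fsum_def by auto

lemma fsum_union:
  "finite A \<Longrightarrow> finite B \<Longrightarrow> A \<inter> B = {} \<Longrightarrow> fsum f (A \<union> B) = fadd (fsum f A) (fsum f B)"
  unfolding fsum_def fadd_def by (rule ext) (simp add: sum.union_disjoint)

lemma fsum_reindex: "inj_on h A \<Longrightarrow> fsum f (h ` A) = fsum (\<lambda>x. f (h x)) A"
  unfolding fsum_def by (rule ext) (simp add: sum.reindex)

lemma fsum_reindex_bij_betw: "bij_betw h A B \<Longrightarrow> fsum (\<lambda>i. f (h i)) A = fsum f B"
  unfolding fsum_def by (rule ext) (rule sum.reindex_bij_betw)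

lemma fsum_Sigma: "finite A \<Longrightarrow> (\<And>a. a \<in> A \<Longrightarrow> finite (B a)) \<Longrightarrow>
    fsum (\<lambda>x. f (fst x) (snd x)) (Sigma A B) = fsum (\<lambda>a. fsum (f a) (B a)) A"
  unfolding fsum_def by (rule ext) (simp add: sum.Sigma split_beta)

lemma fsum_delta: "a \<in> A \<Longrightarrow> finite A \<Longrightarrow> fsum (\<lambda>b. if b = a then t else (\<lambda>_. 0)) A = t"
proof
  fix w
  assume "a \<in> A" "finite A"
  moreover have "fsum (\<lambda>b. if b = a then t else (\<lambda>_. 0)) A w = (\<Sum>b\<in>A. if b = a then t w else 0)"
    unfolding fsum_def by (rule sum.cong) auto
  ultimately show "fsum (\<lambda>b. if b = a then t else (\<lambda>_. 0)) A w = t w" by (simp add: sum.delta)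
qed

lemma fsupp_fdiff: "fsupp (fdiff p q) \<subseteq> fsupp p \<union> fsupp q"
  unfolding fsupp_def fdiff_def by auto

lemma fsupp_fadd: "fsupp (fadd p q) \<subseteq> fsupp p \<union> fsupp q"
  unfolding fsupp_def fadd_def by auto

lemma fsupp_fsmult: "fsupp (fsmult c p) \<subseteq> fsupp p"
  unfolding fsupp_def fsmult_def by auto

lemma fsupp_mono: "fsupp (mono w) = {w}"
  unfolding fsupp_def mono_def by auto

lemma finite_fsupp_fdiff_mono: "finite (fsupp (fdiff (mono a) (mono b)))"
  by (rule finite_subset[OF fsupp_fdiff]) (simp add: fsupp_mono)

lemma fsupp_fsum: "fsupp (fsum f A) \<subseteq> (\<Union>i\<in>A. fsupp (f i))"
proof
  fix w assume "w \<in> fsupp (fsum f A)"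
  then have "(\<Sum>i\<in>A. f i w) \<noteq> 0" unfolding fsupp_def fsum_def by simp
  then obtain i where "i \<in> A" "f i w \<noteq> 0" by (meson sum.not_neutral_contains_not_neutral)
  then show "w \<in> (\<Union>i\<in>A. fsupp (f i))" unfolding fsupp_def by blast
qed

lemma finite_fsupp_fsum:
  "finite A \<Longrightarrow> (\<And>i. i \<in> A \<Longrightarrow> finite (fsupp (f i))) \<Longrightarrow> finite (fsupp (fsum f A))"
  by (rule finite_subset[OF fsupp_fsum]) (rule finite_UN_I)

lemma fsupp_fmult_mono_left: "fsupp (fmult (mono v) p) \<subseteq> (\<lambda>w. v @ w) ` fsupp p"
proof
  fix w assume "w \<in> fsupp (fmult (mono v) p)"
  then have c: "take (length v) w = v" "p (drop (length v) w) \<noteq> 0"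
    unfolding fsupp_def fmult_mono_left by (simp_all split: if_splits)
  have "w = v @ drop (length v) w" using c(1) append_take_drop_id[of "length v" w] by simp
  moreover have "drop (length v) w \<in> fsupp p" using c(2) unfolding fsupp_def by simp
  ultimately show "w \<in> (\<lambda>w. v @ w) ` fsupp p" by (rule image_eqI)
qed

lemma fsupp_fmult_mono_right: "fsupp (fmult p (mono v)) \<subseteq> (\<lambda>w. w @ v) ` fsupp p"
proof
  fix w assume "w \<in> fsupp (fmult p (mono v))"
  then have c: "drop (length w - length v) w = v" "p (take (length w - length v) w) \<noteq> 0"
    unfolding fsupp_def fmult_mono_right by (simp_all split: if_splits)
  have "w = take (length w - length v) w @ v"
    using c(1) append_take_drop_id[of "length w - length v" w] by simp
  moreover have "take (length w - length v) w \<in> fsupp p" using c(2) unfolding fsupp_def by simp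
  ultimately show "w \<in> (\<lambda>w. w @ v) ` fsupp p" by (rule image_eqI)
qed

lemma gstar_gstar [simp]: "gstar (gstar g) = g"
  by (cases g) auto

lemma gstar_comp_Ed [simp]: "gstar \<circ> Ed = Gh"
  by (rule ext) simp

lemma rev_map_gstar_involutive [simp]: "rev (map gstar (rev (map gstar w))) = w"
  by (simp add: rev_map comp_def)

lemma rev_map_gstar_eq_iff: "(rev (map gstar x) = w) = (x = rev (map gstar w))"
  by (metis rev_map_gstar_involutive)

lemma fstar_fstar [simp]: "fstar (fstar p) = p"
  unfolding fstar_def by simp

lemma fstar_mono: "fstar (mono w) = mono (rev (map gstar w))"
  unfolding fstar_def mono_def by (rule ext) (simp add: rev_map_gstar_eq_iff)

lemma fstar_fdiff: "fstar (fdiff p q) = fdiff (fstar p) (fstar q)"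
  unfolding fstar_def fdiff_def by auto

lemma fstar_fadd: "fstar (fadd p q) = fadd (fstar p) (fstar q)"
  unfolding fstar_def fadd_def by auto

lemma fstar_fsmult: "fstar (fsmult c p) = fsmult (cnj c) (fstar p)"
  unfolding fstar_def fsmult_def by auto

lemma fstar_fsum: "fstar (fsum f A) = fsum (\<lambda>i. fstar (f i)) A"
  unfolding fstar_def fsum_def by auto

lemma fstar_zero: "fstar (\<lambda>_. 0) = (\<lambda>_. 0)"
  unfolding fstar_def by auto

lemma rev_map_take: "rev (map f (take i w)) = drop (length w - i) (rev (map f w))"
  by (metis length_map rev_take take_map)

lemma rev_map_drop: "rev (map f (drop i w)) = take (length w - i) (rev (map f w))"
  by (metis length_map rev_drop drop_map)

lemma fstar_fmult: "fstar (fmult a b) = fmult (fstar b) (fstar a)"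
proof
  fix w :: "('a,'b) gen list"
  define w' where "w' = rev (map gstar w)"
  define n where "n = length w"
  have ln: "length w' = n" unfolding w'_def n_def by simp
  have "fmult (fstar b) (fstar a) w =
      (\<Sum>j\<in>{0..n}. cnj (b (drop (n - j) w')) * cnj (a (take (n - j) w')))"
    unfolding fmult_def fstar_def n_def w'_def
    by (rule sum.cong) (auto simp: atMost_atLeast0 rev_map_take rev_map_drop)
  also have "\<dots> = (\<Sum>j\<in>{0..n}. cnj (b (drop j w')) * cnj (a (take j w')))"
    by (subst sum.atLeastAtMost_rev) (rule sum.cong, auto)
  also have "\<dots> = fstar (fmult a b) w"
    unfolding fstar_def fmult_def using ln
    by (simp add: w'_def[symmetric] atMost_atLeast0 mult.commute)
  finally show "fstar (fmult a b) w = fmult (fstar b) (fstar a) w" by simp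
qed

lemma fsupp_fstar:
  fixes p :: "('v,'e) fa"
  shows "fsupp (fstar p) = (\<lambda>w. rev (map gstar w)) ` fsupp p"
proof (rule set_eqI)
  fix x :: "('v,'e) gen list"
  have "x = rev (map gstar (rev (map gstar x)))" by simp
  then show "x \<in> fsupp (fstar p) \<longleftrightarrow> x \<in> (\<lambda>w. rev (map gstar w)) ` fsupp p"
    unfolding fsupp_def fstar_def by (auto intro: image_eqI[rotated])
qed

lemma gstar_in_gens: "x \<in> gens E0 E1 \<Longrightarrow> gstar x \<in> gens E0 E1"
  unfolding gens_def by auto

section \<open>The Leavitt congruence\<close>

locale leavitt =
  fixes R :: "complex set" and E0 :: "'v set" and E1 :: "'e set" and r s :: "'e \<Rightarrow> 'v"
  assumes finite_graph: "finite_graph E0 E1 r s" and conj_subring: "conj_subring R"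
begin

abbreviation "I \<equiv> lpa_ideal R E0 E1 r s"
abbreviation "G \<equiv> gens E0 E1"
abbreviation lpa_equiv (infix "\<approx>" 50) where "p \<approx> q \<equiv> lpa_eq R E0 E1 r s p q"
abbreviation Z where "Z \<equiv> (\<lambda>_::('v,'e) gen list. 0::complex)"

lemma finite_E0: "finite E0" and finite_E1: "finite E1"
  and r_in_E0: "e \<in> E1 \<Longrightarrow> r e \<in> E0" and s_in_E0: "e \<in> E1 \<Longrightarrow> s e \<in> E0"
  using finite_graph unfolding finite_graph_def graph_def by auto

lemma R_zero: "0 \<in> R" and R_one: "1 \<in> R" and R_add: "x \<in> R \<Longrightarrow> y \<in> R \<Longrightarrow> x + y \<in> R"
  and R_diff: "x \<in> R \<Longrightarrow> y \<in> R \<Longrightarrow> x - y \<in> R"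
  and R_mult: "x \<in> R \<Longrightarrow> y \<in> R \<Longrightarrow> x * y \<in> R"
  and R_cnj: "x \<in> R \<Longrightarrow> cnj x \<in> R"
  using conj_subring unfolding conj_subring_def by auto

lemma R_sum: "(\<And>i. i \<in> A \<Longrightarrow> f i \<in> R) \<Longrightarrow> sum f A \<in> R"
  by (induction A rule: infinite_finite_induct) (simp_all add: R_zero R_add)

lemma gensI: "v \<in> E0 \<Longrightarrow> Vx v \<in> G" "e \<in> E1 \<Longrightarrow> Ed e \<in> G" "e \<in> E1 \<Longrightarrow> Gh e \<in> G"
  and gensD: "Vx v \<in> G \<Longrightarrow> v \<in> E0" "Ed e \<in> G \<Longrightarrow> e \<in> E1" "Gh e \<in> G \<Longrightarrow> e \<in> E1"
  unfolding gens_def by auto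

lemma set_map_Ed_gens: "set es \<subseteq> E1 \<Longrightarrow> set (map Ed es) \<subseteq> G"
  unfolding gens_def by auto

text \<open>Unlike \<open>free_alg\<close>, a coefficient at the empty word is allowed.\<close>

definition free_elem :: "('v,'e) fa \<Rightarrow> bool" where
  "free_elem p \<longleftrightarrow> finite (fsupp p) \<and> (\<forall>w. p w \<in> R) \<and> (\<forall>w. p w \<noteq> 0 \<longrightarrow> set w \<subseteq> G)"

lemma free_elem_mono: "set w \<subseteq> G \<Longrightarrow> free_elem (mono w)"
  unfolding free_elem_def mono_def fsupp_def using R_zero R_one by auto

lemma free_elem_zero: "free_elem Z"
  unfolding free_elem_def fsupp_def using R_zero by auto

lemma free_elem_fsmult: "c \<in> R \<Longrightarrow> free_elem p \<Longrightarrow> free_elem (fsmult c p)"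
  unfolding free_elem_def fsmult_def fsupp_def by (auto intro: R_mult elim: rev_finite_subset)

lemma free_elem_fadd:
  assumes "free_elem p" "free_elem q"
  shows "free_elem (fadd p q)"
proof -
  have "finite (fsupp (fadd p q))"
    using assms fsupp_fadd[of p q] unfolding free_elem_def by (meson finite_Un finite_subset)
  moreover have "fadd p q w \<noteq> 0 \<Longrightarrow> set w \<subseteq> G" for w
    using assms unfolding free_elem_def fadd_def by (metis add.right_neutral add_0)
  ultimately show ?thesis using assms unfolding free_elem_def fadd_def by (simp add: R_add)
qed

lemma free_elem_fsum: "finite A \<Longrightarrow> (\<And>i. i \<in> A \<Longrightarrow> free_elem (f i)) \<Longrightarrow> free_elem (fsum f A)"
proof (induction A rule: finite_induct)
  case empty then show ?case by (simp add: fsum_def free_elem_zero)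
next
  case (insert x F) then show ?case by (simp add: fsum_insert free_elem_fadd)
qed

lemma free_elem_fstar:
  assumes p: "free_elem p"
  shows "free_elem (fstar p)"
proof -
  have "set w \<subseteq> G" if "fstar p w \<noteq> 0" for w
  proof
    fix x assume x: "x \<in> set w"
    have "p (rev (map gstar w)) \<noteq> 0" using that unfolding fstar_def by simp
    then have "set (rev (map gstar w)) \<subseteq> G" using p unfolding free_elem_def by blast
    then have "gstar x \<in> G" using x by auto
    then show "x \<in> G" using gstar_in_gens[of "gstar x"] by simp
  qed
  then show ?thesis using p unfolding free_elem_def fsupp_fstar by (simp add: fstar_def R_cnj)
qed

lemma free_elem_fmult:
  assumes a: "free_elem a" and b: "free_elem b"
  shows "free_elem (fmult a b)"
proof -
  have sub: "fsupp (fmult a b) \<subseteq> (\<lambda>(x,y). x @ y) ` (fsupp a \<times> fsupp b)"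
  proof
    fix w assume "w \<in> fsupp (fmult a b)"
    then have "(\<Sum>i\<le>length w. a (take i w) * b (drop i w)) \<noteq> 0"
      unfolding fsupp_def fmult_def by simp
    then obtain i where "a (take i w) * b (drop i w) \<noteq> 0"
      by (meson sum.not_neutral_contains_not_neutral)
    then have "(take i w, drop i w) \<in> fsupp a \<times> fsupp b" unfolding fsupp_def by simp
    then show "w \<in> (\<lambda>(x,y). x @ y) ` (fsupp a \<times> fsupp b)"
      by (rule image_eqI[rotated]) simp
  qed
  have "finite (fsupp (fmult a b))"
    by (rule finite_subset[OF sub]) (use a b in \<open>simp add: free_elem_def\<close>)
  moreover have "fmult a b w \<in> R" for w
    unfolding fmult_def using a b unfolding free_elem_def by (intro R_sum R_mult) blast+
  moreover have "set w \<subseteq> G" if "fmult a b w \<noteq> 0" for w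
  proof -
    have "w \<in> (\<lambda>(x,y). x @ y) ` (fsupp a \<times> fsupp b)"
      using that sub unfolding fsupp_def by blast
    then show ?thesis using a b unfolding free_elem_def fsupp_def by fastforce
  qed
  ultimately show ?thesis unfolding free_elem_def by blast
qed

lemma free_elem_lpa_one: "free_elem (lpa_one E0)"
  unfolding lpa_one_def using finite_E0 by (auto intro!: free_elem_fsum free_elem_mono gensI)

lemma lpa_relations_fstar: "g \<in> lpa_relations E0 E1 r s \<Longrightarrow> fstar g \<in> lpa_relations E0 E1 r s"
  unfolding lpa_relations_def
  by (elim UnE CollectE exE conjE; simp add: fstar_mono fstar_fdiff fstar_fsum; blast)

lemma ideal_fsum: "finite A \<Longrightarrow> (\<And>i. i \<in> A \<Longrightarrow> f i \<in> I) \<Longrightarrow> fsum f A \<in> I"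
proof (induction A rule: finite_induct)
  case empty then show ?case by (simp add: fsum_def lpa_ideal.zero)
next
  case (insert x F) then show ?case by (simp add: fsum_insert lpa_ideal.add)
qed

lemma ideal_fstar: "p \<in> I \<Longrightarrow> fstar p \<in> I"
proof (induction rule: lpa_ideal.induct)
  case zero then show ?case by (simp add: fstar_zero lpa_ideal.zero)
next
  case (rel g) then show ?case by (simp add: lpa_relations_fstar lpa_ideal.rel)
next
  case (add p q) then show ?case by (simp add: fstar_fadd lpa_ideal.add)
next
  case (smult c p) then show ?case by (simp add: fstar_fsmult lpa_ideal.smult R_cnj)
next
  case (lmult x p) then show ?case
    by (simp add: fstar_fmult fstar_mono lpa_ideal.rmult gstar_in_gens)
next
  case (rmult x p) then show ?case
    by (simp add: fstar_fmult fstar_mono lpa_ideal.lmult gstar_in_gens)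
qed

lemma ideal_fmult_mono_left: "p \<in> I \<Longrightarrow> set v \<subseteq> G \<Longrightarrow> fmult (mono v) p \<in> I"
proof (induction v)
  case Nil
  have "fmult (mono []) p = p" by (rule ext) (simp add: fmult_mono_left)
  then show ?case using Nil by simp
next
  case (Cons g v)
  have "mono (g # v) = fmult (mono [g]) (mono v)" by (simp add: fmult_mono_mono)
  then show ?case using Cons by (simp add: fmult_assoc_mono lpa_ideal.lmult)
qed

lemma ideal_fmult_mono_right: "p \<in> I \<Longrightarrow> set v \<subseteq> G \<Longrightarrow> fmult p (mono v) \<in> I"
proof -
  assume "p \<in> I" "set v \<subseteq> G"
  then have "fstar (fmult (mono (rev (map gstar v))) (fstar p)) \<in> I"
    by (intro ideal_fstar ideal_fmult_mono_left) (auto intro: gstar_in_gens)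
  then show ?thesis by (simp add: fstar_fmult fstar_mono)
qed

lemma ideal_fmult_left: "free_elem a \<Longrightarrow> p \<in> I \<Longrightarrow> fmult a p \<in> I"
  unfolding free_elem_def
  by (subst fmult_expand_left[where S="fsupp a"])
    (auto intro!: ideal_fsum lpa_ideal.smult ideal_fmult_mono_left simp: fsupp_def)

lemma ideal_fmult_right: "free_elem a \<Longrightarrow> p \<in> I \<Longrightarrow> fmult p a \<in> I"
  unfolding free_elem_def
  by (subst fmult_expand_right[where S="fsupp a"])
    (auto intro!: ideal_fsum lpa_ideal.smult ideal_fmult_mono_right simp: fsupp_def)

lemma lpa_eq_refl: "p \<approx> p"
  unfolding lpa_eq_def fdiff_def by (simp add: lpa_ideal.zero)

lemma lpa_eq_sym: "p \<approx> q \<Longrightarrow> q \<approx> p"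
proof -
  assume "p \<approx> q"
  then have "fsmult (-1) (fdiff p q) \<in> I"
    unfolding lpa_eq_def by (rule lpa_ideal.smult[OF R_diff[OF R_zero R_one, simplified]])
  moreover have "fsmult (-1) (fdiff p q) = fdiff q p" unfolding fsmult_def fdiff_def by auto
  ultimately show ?thesis unfolding lpa_eq_def by simp
qed

lemma lpa_eq_trans [trans]: "p \<approx> q \<Longrightarrow> q \<approx> t \<Longrightarrow> p \<approx> t"
proof -
  assume "p \<approx> q" "q \<approx> t"
  then have "fadd (fdiff p q) (fdiff q t) \<in> I" unfolding lpa_eq_def by (rule lpa_ideal.add)
  moreover have "fadd (fdiff p q) (fdiff q t) = fdiff p t" unfolding fadd_def fdiff_def by auto
  ultimately show ?thesis unfolding lpa_eq_def by simp
qed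

lemma lpa_eq_eq_trans [trans]: "p \<approx> q \<Longrightarrow> q = t \<Longrightarrow> p \<approx> t"
  and eq_lpa_eq_trans [trans]: "p = q \<Longrightarrow> q \<approx> t \<Longrightarrow> p \<approx> t"
  by simp_all

lemma lpa_eq_fadd: "p \<approx> q \<Longrightarrow> p' \<approx> q' \<Longrightarrow> fadd p p' \<approx> fadd q q'"
proof -
  assume "p \<approx> q" "p' \<approx> q'"
  then have "fadd (fdiff p q) (fdiff p' q') \<in> I" unfolding lpa_eq_def by (rule lpa_ideal.add)
  moreover have "fadd (fdiff p q) (fdiff p' q') = fdiff (fadd p p') (fadd q q')"
    unfolding fadd_def fdiff_def by auto
  ultimately show ?thesis unfolding lpa_eq_def by simp
qed

lemma lpa_eq_fsum: "finite A \<Longrightarrow> (\<And>i. i \<in> A \<Longrightarrow> f i \<approx> g i) \<Longrightarrow> fsum f A \<approx> fsum g A"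
  unfolding lpa_eq_def fsum_fdiff by (rule ideal_fsum)

lemma lpa_eq_fsmult: "c \<in> R \<Longrightarrow> p \<approx> q \<Longrightarrow> fsmult c p \<approx> fsmult c q"
proof -
  assume "c \<in> R" "p \<approx> q"
  moreover have "fdiff (fsmult c p) (fsmult c q) = fsmult c (fdiff p q)"
    unfolding fsmult_def fdiff_def by (auto simp: right_diff_distrib)
  ultimately show ?thesis unfolding lpa_eq_def by (simp add: lpa_ideal.smult)
qed

lemma lpa_eq_fmult_left: "free_elem a \<Longrightarrow> p \<approx> q \<Longrightarrow> fmult a p \<approx> fmult a q"
  unfolding lpa_eq_def fmult_fdiff_right[symmetric] by (rule ideal_fmult_left)

lemma lpa_eq_fmult_right: "free_elem a \<Longrightarrow> p \<approx> q \<Longrightarrow> fmult p a \<approx> fmult q a"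
  unfolding lpa_eq_def fmult_fdiff_left[symmetric] by (rule ideal_fmult_right)

lemma lpa_eq_fstar: "p \<approx> q \<Longrightarrow> fstar p \<approx> fstar q"
  unfolding lpa_eq_def fstar_fdiff[symmetric] by (rule ideal_fstar)

lemma lpa_eq_fsum_single:
  assumes "finite A" "a \<in> A" "f a \<approx> t" "\<And>b. b \<in> A \<Longrightarrow> b \<noteq> a \<Longrightarrow> f b \<approx> Z"
  shows "fsum f A \<approx> t"
proof -
  have "fsum f A \<approx> fsum (\<lambda>b. if b = a then t else Z) A"
    by (rule lpa_eq_fsum[OF assms(1)]) (use assms in auto)
  then show ?thesis by (simp add: fsum_delta[OF assms(2,1)])
qed

lemma rewrite_word:
  "fdiff (mono x) (mono y) \<in> lpa_relations E0 E1 r s \<Longrightarrow> set a \<subseteq> G \<Longrightarrow> set b \<subseteq> G \<Longrightarrow>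
   mono (a @ x @ b) \<approx> mono (a @ y @ b)"
  using lpa_eq_fmult_left[OF free_elem_mono lpa_eq_fmult_right[OF free_elem_mono
      lpa_ideal.rel[of "fdiff (mono x) (mono y)", folded lpa_eq_def]], of a b]
  by (simp add: fmult_mono_mono)

lemma rewrite_word_zero:
  "mono x \<in> lpa_relations E0 E1 r s \<Longrightarrow> set a \<subseteq> G \<Longrightarrow> set b \<subseteq> G \<Longrightarrow> mono (a @ x @ b) \<approx> Z"
  using lpa_eq_fmult_left[OF free_elem_mono lpa_eq_fmult_right[OF free_elem_mono
      lpa_ideal.rel[of "mono x", folded lpa_eq_def[of _ _ _ _ _ _ Z, unfolded fdiff_def, simplified]]], of a b]
  by (simp add: fmult_mono_mono fmult_zero_left fmult_zero_right)

lemma rel_vertex_orth: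
  "v \<in> E0 \<Longrightarrow> w \<in> E0 \<Longrightarrow> v \<noteq> w \<Longrightarrow> mono [Vx v, Vx w] \<in> lpa_relations E0 E1 r s"
  unfolding lpa_relations_def Un_iff mem_Collect_eq by fast

lemma rel_vertex_idem: "v \<in> E0 \<Longrightarrow> fdiff (mono [Vx v, Vx v]) (mono [Vx v]) \<in> lpa_relations E0 E1 r s"
  unfolding lpa_relations_def Un_iff mem_Collect_eq by blast

lemma rel_ghost_edge_orth:
  "e \<in> E1 \<Longrightarrow> f \<in> E1 \<Longrightarrow> e \<noteq> f \<Longrightarrow> mono [Gh e, Ed f] \<in> lpa_relations E0 E1 r s"
  unfolding lpa_relations_def Un_iff mem_Collect_eq by fast

lemma rel_ghost_edge: "e \<in> E1 \<Longrightarrow> fdiff (mono [Gh e, Ed e]) (mono [Vx (r e)]) \<in> lpa_relations E0 E1 r s"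
  unfolding lpa_relations_def Un_iff mem_Collect_eq by blast

lemma rel_source_edge: "e \<in> E1 \<Longrightarrow> fdiff (mono [Vx (s e), Ed e]) (mono [Ed e]) \<in> lpa_relations E0 E1 r s"
  unfolding lpa_relations_def Un_iff mem_Collect_eq by blast

lemma rel_edge_range: "e \<in> E1 \<Longrightarrow> fdiff (mono [Ed e, Vx (r e)]) (mono [Ed e]) \<in> lpa_relations E0 E1 r s"
  unfolding lpa_relations_def Un_iff mem_Collect_eq by blast

lemma rel_ghost_source: "e \<in> E1 \<Longrightarrow> fdiff (mono [Gh e, Vx (s e)]) (mono [Gh e]) \<in> lpa_relations E0 E1 r s"
  unfolding lpa_relations_def Un_iff mem_Collect_eq by blast

lemma rel_cuntz_krieger:
  "v \<in> E0 \<Longrightarrow> {e\<in>E1. s e = v} \<noteq> {} \<Longrightarrow>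
   fdiff (mono [Vx v]) (fsum (\<lambda>e. mono [Ed e, Gh e]) {e\<in>E1. s e = v}) \<in> lpa_relations E0 E1 r s"
  unfolding lpa_relations_def using finite_E1 by (intro UnI2) auto

text \<open>A generator \<open>g\<close> absorbing the vertex \<open>x\<close> is killed by every other vertex.\<close>

lemma vertex_mismatch_right:
  assumes rel: "fdiff (mono [g, Vx x]) (mono [g]) \<in> lpa_relations E0 E1 r s"
    and "x \<in> E0" "y \<in> E0" "x \<noteq> y" "g \<in> G" "set a \<subseteq> G" "set b \<subseteq> G"
  shows "mono (a @ [g, Vx y] @ b) \<approx> Z"
proof -
  have "mono (a @ [g, Vx y] @ b) \<approx> mono ((a @ [g]) @ [Vx x, Vx y] @ b)"
    using lpa_eq_sym[OF rewrite_word[OF rel, of a "Vx y # b"]] assms by (simp add: gensI)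
  also have "\<dots> \<approx> Z" by (rule rewrite_word_zero[OF rel_vertex_orth]) (use assms in auto)
  finally show ?thesis .
qed

lemma vertex_mismatch_left:
  assumes rel: "fdiff (mono [Vx x, g]) (mono [g]) \<in> lpa_relations E0 E1 r s"
    and "x \<in> E0" "y \<in> E0" "x \<noteq> y" "g \<in> G" "set a \<subseteq> G" "set b \<subseteq> G"
  shows "mono (a @ [Vx y, g] @ b) \<approx> Z"
proof -
  have "mono (a @ [Vx y, g] @ b) \<approx> mono (a @ [Vx y, Vx x] @ g # b)"
    using lpa_eq_sym[OF rewrite_word[OF rel, of "a @ [Vx y]" b]] assms by (simp add: gensI)
  also have "\<dots> \<approx> Z" by (rule rewrite_word_zero[OF rel_vertex_orth]) (use assms in auto)
  finally show ?thesis .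
qed

end

section \<open>Multiplying paths by words\<close>

definition path_word :: "('v,'e) path \<Rightarrow> ('v,'e) gen list" where
  "path_word q = (if snd q = [] then [Vx (fst q)] else map Ed (snd q))"

definition path_len :: "('v,'e) path \<Rightarrow> nat" where
  "path_len q = length (snd q)"

lemma path_elt_eq_mono: "path_elt q = mono (path_word q)"
  unfolding path_elt_def path_word_def by simp

fun ghost_count :: "('v,'e) gen list \<Rightarrow> nat" where
  "ghost_count [] = 0"
| "ghost_count (Gh e # w) = Suc (ghost_count w)"
| "ghost_count (Vx v # w) = ghost_count w"
| "ghost_count (Ed e # w) = ghost_count w"

lemma ghost_count_append: "ghost_count (a @ b) = ghost_count a + ghost_count b"
proof (induction a)
  case (Cons g a) then show ?case by (cases g) auto
qed simp

lemma ghost_count_le_length: "ghost_count w \<le> length w"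
proof (induction w)
  case (Cons g w) then show ?case by (cases g) auto
qed simp

lemma edge_chain_Cons:
  "edge_chain r s (e # es) = (edge_chain r s es \<and> (es \<noteq> [] \<longrightarrow> r e = s (hd es)))"
  by (cases es) auto

lemma edge_chain_snoc:
  "edge_chain r s (es @ [e]) = (edge_chain r s es \<and> (es \<noteq> [] \<longrightarrow> r (last es) = s e))"
proof (induction es)
  case (Cons x es) then show ?case by (cases es) (auto simp: edge_chain_Cons)
qed simp

lemma paths_iff: "(v, es) \<in> paths E0 E1 r s \<longleftrightarrow>
    v \<in> E0 \<and> set es \<subseteq> E1 \<and> (es \<noteq> [] \<longrightarrow> s (hd es) = v) \<and> edge_chain r s es"
  unfolding paths_def by auto

context leavitt
begin

definition path_range :: "('v,'e) path \<Rightarrow> 'v" where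
  "path_range q = (if snd q = [] then fst q else r (last (snd q)))"

definition sink :: "'v \<Rightarrow> bool" where
  "sink v \<longleftrightarrow> (\<forall>e\<in>E1. s e \<noteq> v)"

lemma path_word_gens: "q \<in> paths E0 E1 r s \<Longrightarrow> set (path_word q) \<subseteq> G"
  unfolding path_word_def paths_def gens_def by auto

lemma free_elem_path: "q \<in> paths E0 E1 r s \<Longrightarrow> free_elem (path_elt q)"
  by (simp add: path_elt_eq_mono free_elem_mono path_word_gens)

lemma path_range_in_E0: "q \<in> paths E0 E1 r s \<Longrightarrow> path_range q \<in> E0"
  unfolding path_range_def paths_def using r_in_E0
  by (auto split: prod.splits) (meson last_in_set subsetD)

definition path_reduct :: "('v,'e) gen list \<Rightarrow> ('v,'e) path \<Rightarrow> ('v,'e) path \<Rightarrow> bool" where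
  "path_reduct w q q' \<longleftrightarrow> q' \<in> paths E0 E1 r s \<and> path_range q' = path_range q \<and>
     mono (w @ path_word q) \<approx> mono (path_word q')"

lemma vertex_times_path:
  assumes v: "v \<in> E0" and q: "(u, es) \<in> paths E0 E1 r s"
  shows "mono (Vx v # path_word (u, es)) \<approx> Z \<or> path_reduct [Vx v] (u, es) (u, es)"
proof -
  have u: "u \<in> E0" using q by (simp add: paths_iff)
  show ?thesis
  proof (cases es)
    case Nil
    then show ?thesis
      using lpa_eq_trans q rewrite_word[OF rel_vertex_idem[OF u], of "[]" "[]"]
        rewrite_word_zero[OF rel_vertex_orth[OF v u], of "[]" "[]"]
      by (cases "v = u") (auto simp: path_reduct_def path_word_def)
  next
    case (Cons e es')
    have e: "e \<in> E1" and se: "s e = u" and es': "set (map Ed es') \<subseteq> G"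
      using q Cons set_map_Ed_gens by (auto simp: paths_iff)
    have word: "path_word (u, es) = Ed e # map Ed es'" using Cons by (simp add: path_word_def)
    show ?thesis
    proof (cases "v = u")
      case True
      then show ?thesis
        using q rewrite_word[OF rel_source_edge[OF e], of "[Vx v]" "map Ed es'"]
          rewrite_word[OF rel_source_edge[OF e], of "[]" "map Ed es'"] es' se v gensI
        by (auto simp: path_reduct_def word intro: lpa_eq_trans)
    next
      case False
      then show ?thesis
        using vertex_mismatch_left[OF rel_source_edge[OF e], of v "[]" "map Ed es'"]
          e s_in_E0 se u v es' gensI by (simp add: word)
    qed
  qed
qed

lemma edge_times_path:
  assumes e: "e \<in> E1" and q: "(u, es) \<in> paths E0 E1 r s"
  shows "mono (Ed e # path_word (u, es)) \<approx> Z \<or>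
    (\<exists>q'. path_reduct [Ed e] (u, es) q' \<and> path_len (u, es) \<le> path_len q')"
proof -
  have u: "u \<in> E0" and es: "set es \<subseteq> E1" and ch: "edge_chain r s es"
    using q by (auto simp: paths_iff)
  show ?thesis
  proof (cases es)
    case Nil
    show ?thesis
    proof (cases "u = r e")
      case True
      have "(s e, [e]) \<in> paths E0 E1 r s" using e s_in_E0 by (auto simp: paths_iff)
      then show ?thesis using Nil True rewrite_word[OF rel_edge_range[OF e], of "[]" "[]"]
        by (intro disjI2 exI[of _ "(s e, [e])"])
          (auto simp: path_reduct_def path_word_def path_len_def path_range_def)
    next
      case False
      then show ?thesis
        using Nil vertex_mismatch_right[OF rel_edge_range[OF e], of u "[]" "[]"] e r_in_E0 u gensI
        by (simp add: path_word_def)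
    qed
  next
    case (Cons f es')
    have f: "f \<in> E1" and es': "set (map Ed es') \<subseteq> G"
      using es Cons set_map_Ed_gens by auto
    show ?thesis
    proof (cases "r e = s f")
      case True
      let ?q = "(s e, e # f # es')"
      have "?q \<in> paths E0 E1 r s" using e s_in_E0 es ch Cons True by (auto simp: paths_iff)
      then show ?thesis using Cons
        by (intro disjI2 exI[of _ ?q])
          (auto simp: path_reduct_def path_word_def path_range_def path_len_def lpa_eq_refl)
    next
      case False
      have "mono (Ed e # Ed f # map Ed es') \<approx> mono ([Ed e] @ [Vx (r e), Ed f] @ map Ed es')"
        using lpa_eq_sym[OF rewrite_word[OF rel_edge_range[OF e], of "[]" "Ed f # map Ed es'"]]
          es' f gensI by simp
      also have "\<dots> \<approx> Z"
        by (rule vertex_mismatch_left[OF rel_source_edge[OF f]])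
          (use False e f es' r_in_E0 s_in_E0 gensI in auto)
      finally show ?thesis using Cons by (simp add: path_word_def)
    qed
  qed
qed

text \<open>The hypothesis excludes the one case in which \<open>e\<^sup>* q\<close> is neither zero nor a path:
  a ghost edge meeting a single vertex that is not a sink.\<close>

lemma ghost_times_path:
  assumes e: "e \<in> E1" and q: "(u, es) \<in> paths E0 E1 r s"
    and long: "es \<noteq> [] \<or> sink u"
  shows "mono (Gh e # path_word (u, es)) \<approx> Z \<or>
    (\<exists>q'. path_reduct [Gh e] (u, es) q' \<and> path_len (u, es) \<le> Suc (path_len q'))"
proof -
  have u: "u \<in> E0" and es: "set es \<subseteq> E1" and ch: "edge_chain r s es"
    and hd: "es \<noteq> [] \<Longrightarrow> s (hd es) = u"
    using q by (auto simp: paths_iff)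
  show ?thesis
  proof (cases es)
    case Nil
    then have "s e \<noteq> u" using long e sink_def by auto
    then show ?thesis
      using Nil vertex_mismatch_right[OF rel_ghost_source[OF e], of u "[]" "[]"] e s_in_E0 u gensI
      by (simp add: path_word_def)
  next
    case (Cons f es')
    have f: "f \<in> E1" and es': "set (map Ed es') \<subseteq> G" using es Cons set_map_Ed_gens by auto
    show ?thesis
    proof (cases "f = e")
      case False
      have "mono ([] @ [Gh e, Ed f] @ map Ed es') \<approx> Z"
        by (rule rewrite_word_zero[OF rel_ghost_edge_orth[OF e f]]) (use False es' in auto)
      then show ?thesis using Cons by (simp add: path_word_def)
    next
      case True
      have cancel: "mono ([] @ [Gh e, Ed e] @ map Ed es') \<approx> mono ([] @ [Vx (r e)] @ map Ed es')"
        by (rule rewrite_word[OF rel_ghost_edge[OF e]]) (use es' in auto)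
      show ?thesis
      proof (cases es')
        case Nil
        have "(r e, []) \<in> paths E0 E1 r s" using r_in_E0[OF e] by (auto simp: paths_iff)
        then show ?thesis using cancel Cons Nil True
          by (intro disjI2 exI[of _ "(r e, [])"])
            (auto simp: path_reduct_def path_word_def path_len_def path_range_def)
      next
        case (Cons f' es'')
        have chain: "r e = s f'" "edge_chain r s es'"
          using ch \<open>es = f # es'\<close> Cons True edge_chain_Cons by auto
        have f': "f' \<in> E1" and es'': "set (map Ed es'') \<subseteq> G"
          using es \<open>es = f # es'\<close> Cons set_map_Ed_gens by auto
        have "mono ([] @ [Vx (s f'), Ed f'] @ map Ed es'') \<approx> mono ([] @ [Ed f'] @ map Ed es'')"
          by (rule rewrite_word[OF rel_source_edge[OF f']]) (use es'' in auto)
        moreover have "(s f', es') \<in> paths E0 E1 r s"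
          using chain f' s_in_E0 es \<open>es = f # es'\<close> Cons by (auto simp: paths_iff)
        ultimately show ?thesis using lpa_eq_trans[OF cancel] True \<open>es = f # es'\<close> Cons chain
          by (intro disjI2 exI[of _ "(s f', es')"])
            (auto simp: path_reduct_def path_word_def path_len_def path_range_def)
      qed
    qed
  qed
qed

lemma gen_times_path:
  assumes g: "g \<in> G" and q: "q \<in> paths E0 E1 r s"
    and long: "ghost_count [g] \<le> path_len q \<or> sink (path_range q)"
  shows "mono (g # path_word q) \<approx> Z \<or>
    (\<exists>q'. path_reduct [g] q q' \<and> path_len q \<le> path_len q' + ghost_count [g])"
proof -
  obtain u es where qu: "q = (u, es)" by (cases q)
  show ?thesis
  proof (cases g)
    case (Vx v)
    then show ?thesis using vertex_times_path[of v u es] g q qu gensD by auto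
  next
    case (Ed e)
    then show ?thesis using edge_times_path[of e u es] g q qu gensD by auto
  next
    case (Gh e)
    have "es \<noteq> [] \<or> sink u" using long Gh qu by (auto simp: path_len_def path_range_def)
    then show ?thesis using ghost_times_path[of e u es] g q qu Gh gensD by auto
  qed
qed

text \<open>Only ghost edges shorten the path, each by one edge, and the range never changes; so a
  ghost edge meets a bare vertex only after \<open>path_len q\<close> earlier ghost edges, and that vertex
  is the range of \<open>q\<close>.\<close>

lemma word_times_path:
  "set w \<subseteq> G \<Longrightarrow> q \<in> paths E0 E1 r s \<Longrightarrow> ghost_count w \<le> path_len q \<or> sink (path_range q) \<Longrightarrow>
   mono (w @ path_word q) \<approx> Z \<or> (\<exists>q'. path_reduct w q q')"
proof (induction w arbitrary: q rule: rev_induct)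
  case Nil
  then show ?case by (intro disjI2 exI[of _ q]) (simp add: path_reduct_def lpa_eq_refl)
next
  case (snoc g w)
  have g: "g \<in> G" and w: "set w \<subseteq> G" using snoc.prems by auto
  have split: "mono ((w @ [g]) @ path_word q) = fmult (mono w) (mono (g # path_word q))"
    by (simp add: fmult_mono_mono)
  have "ghost_count [g] \<le> path_len q \<or> sink (path_range q)"
    using snoc.prems(3) by (auto simp: ghost_count_append)
  from gen_times_path[OF g snoc.prems(2) this] show ?case
  proof
    assume "mono (g # path_word q) \<approx> Z"
    then have "fmult (mono w) (mono (g # path_word q)) \<approx> Z"
      using lpa_eq_fmult_left[OF free_elem_mono[OF w]] by (fastforce simp: fmult_zero_right)
    then show ?case using split by simp
  next
    assume "\<exists>q'. path_reduct [g] q q' \<and> path_len q \<le> path_len q' + ghost_count [g]"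
    then obtain q' where q': "path_reduct [g] q q'" "path_len q \<le> path_len q' + ghost_count [g]"
      by blast
    have "fmult (mono w) (mono (g # path_word q)) \<approx> fmult (mono w) (mono (path_word q'))"
      using lpa_eq_fmult_left[OF free_elem_mono[OF w]] q'(1) by (simp add: path_reduct_def)
    then have step: "mono ((w @ [g]) @ path_word q) \<approx> mono (w @ path_word q')"
      using split by (simp add: fmult_mono_mono)
    have "ghost_count w \<le> path_len q' \<or> sink (path_range q')"
      using snoc.prems(3) q' by (auto simp: ghost_count_append path_reduct_def)
    from snoc.IH[OF w _ this] q'(1) show ?case
      using lpa_eq_trans[OF step] by (auto simp: path_reduct_def)
  qed
qed

lemma mono_mult_lpa_one:
  assumes w: "set w \<subseteq> G" "w \<noteq> []"
  shows "fmult (mono w) (lpa_one E0) \<approx> mono w"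
proof -
  obtain w0 g where wg: "w = w0 @ [g]" using w(2) by (metis rev_exhaust)
  have g: "g \<in> G" and w0: "set w0 \<subseteq> G" using w wg by auto
  have eq: "fmult (mono w) (lpa_one E0) = fsum (\<lambda>v. mono (w0 @ [g, Vx v])) E0"
    unfolding lpa_one_def fmult_fsum_right fmult_mono_mono wg by simp
  have "\<exists>x\<in>E0. fdiff (mono [g, Vx x]) (mono [g]) \<in> lpa_relations E0 E1 r s"
    using g by (cases g) (auto intro: rel_vertex_idem rel_edge_range rel_ghost_source r_in_E0
        s_in_E0 dest: gensD)
  then obtain x where x: "x \<in> E0" "fdiff (mono [g, Vx x]) (mono [g]) \<in> lpa_relations E0 E1 r s"
    by blast
  show ?thesis unfolding eq
  proof (rule lpa_eq_fsum_single[OF finite_E0 x(1)])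
    show "mono (w0 @ [g, Vx x]) \<approx> mono w" using rewrite_word[OF x(2) w0, of "[]"] wg by simp
  qed (use vertex_mismatch_right[OF x(2)] x(1) g w0 in auto)
qed

lemma fmult_lpa_one_right:
  assumes "free_elem u" "u [] = 0"
  shows "fmult u (lpa_one E0) \<approx> u"
proof -
  have fin: "finite (fsupp u)" using assms unfolding free_elem_def by auto
  have "fmult u (lpa_one E0) = fsum (\<lambda>w. fsmult (u w) (fmult (mono w) (lpa_one E0))) (fsupp u)"
    by (rule fmult_expand_left[OF fin]) simp
  moreover have "\<dots> \<approx> fsum (\<lambda>w. fsmult (u w) (mono w)) (fsupp u)"
  proof (rule lpa_eq_fsum[OF fin])
    fix w assume "w \<in> fsupp u"
    then have "set w \<subseteq> G" "w \<noteq> []" "u w \<in> R" using assms unfolding free_elem_def fsupp_def by auto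
    then show "fsmult (u w) (fmult (mono w) (lpa_one E0)) \<approx> fsmult (u w) (mono w)"
      by (intro lpa_eq_fsmult mono_mult_lpa_one)
  qed
  moreover have "fsum (\<lambda>w. fsmult (u w) (mono w)) (fsupp u) = u"
    using fsum_monomials[OF fin] by simp
  ultimately show ?thesis by simp
qed

end

section \<open>A partition of the unit by paths\<close>

context leavitt
begin

definition frontier :: "nat \<Rightarrow> ('v,'e) path set" where
  "frontier N = {q \<in> paths E0 E1 r s. path_len q = N \<or> (path_len q < N \<and> sink (path_range q))}"

definition path_proj :: "('v,'e) path \<Rightarrow> ('v,'e) fa" where
  "path_proj q = fmult (path_elt q) (fstar (path_elt q))"

definition out_edges :: "'v \<Rightarrow> 'e set" where
  "out_edges v = {e \<in> E1. s e = v}"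

definition path_snoc :: "('v,'e) path \<Rightarrow> 'e \<Rightarrow> ('v,'e) path" where
  "path_snoc q e = (fst q, snd q @ [e])"

lemma path_proj_mono: "path_proj q = mono (path_word q @ rev (map gstar (path_word q)))"
  unfolding path_proj_def path_elt_eq_mono fstar_mono fmult_mono_mono ..

lemma finite_frontier: "finite (frontier N)"
proof (rule finite_subset)
  show "frontier N \<subseteq> E0 \<times> {es. set es \<subseteq> E1 \<and> length es \<le> N}"
    unfolding frontier_def path_len_def by (auto simp: paths_def)
  show "finite (E0 \<times> {es. set es \<subseteq> E1 \<and> length es \<le> N})"
    using finite_E0 finite_E1 finite_lists_length_le by auto
qed

lemma frontier_paths: "q \<in> frontier N \<Longrightarrow> q \<in> paths E0 E1 r s"
  unfolding frontier_def by auto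

lemma path_snoc_paths:
  "q \<in> paths E0 E1 r s \<Longrightarrow> e \<in> out_edges (path_range q) \<Longrightarrow> path_snoc q e \<in> paths E0 E1 r s"
  unfolding path_snoc_def path_range_def out_edges_def
  by (cases q) (auto simp: paths_iff edge_chain_snoc hd_append split: if_splits)

lemma path_proj_cuntz_krieger:
  assumes q: "q \<in> paths E0 E1 r s" and not_sink: "\<not> sink (path_range q)"
  shows "path_proj q \<approx> fsum (\<lambda>e. path_proj (path_snoc q e)) (out_edges (path_range q))"
proof -
  obtain v es where qv: "q = (v, es)" by (cases q)
  have v: "v \<in> E0" and es: "set es \<subseteq> E1" using q qv by (auto simp: paths_iff)
  let ?a = "map Ed es" and ?b = "rev (map Gh es)" and ?u = "path_range q"
  have a: "set ?a \<subseteq> G" and b: "set ?b \<subseteq> G" using es gensI by auto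
  have u: "?u \<in> E0" using path_range_in_E0[OF q] .
  have "path_proj q \<approx> mono (?a @ [Vx ?u] @ ?b)"
  proof (cases es rule: rev_cases)
    case Nil
    then show ?thesis using qv lpa_ideal.rel[OF rel_vertex_idem[OF v]]
      by (simp add: path_proj_mono path_word_def path_range_def lpa_eq_def)
  next
    case (snoc es0 e)
    have e: "e \<in> E1" using es snoc by auto
    have "mono (map Ed es0 @ [Ed e, Vx (r e)] @ (Gh e # rev (map Gh es0))) \<approx>
        mono (map Ed es0 @ [Ed e] @ (Gh e # rev (map Gh es0)))"
      by (rule rewrite_word[OF rel_edge_range[OF e]]) (use es snoc gensI in auto)
    from lpa_eq_sym[OF this] show ?thesis using qv snoc
      by (simp add: path_proj_mono path_word_def path_range_def rev_map)
  qed
  also have "mono (?a @ [Vx ?u] @ ?b) \<approx>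
      fmult (mono ?a) (fmult (fsum (\<lambda>e. mono [Ed e, Gh e]) (out_edges ?u)) (mono ?b))"
  proof -
    have "{e \<in> E1. s e = ?u} \<noteq> {}" using not_sink unfolding sink_def by auto
    then have "mono [Vx ?u] \<approx> fsum (\<lambda>e. mono [Ed e, Gh e]) (out_edges ?u)"
      using lpa_ideal.rel[OF rel_cuntz_krieger[OF u]] unfolding lpa_eq_def out_edges_def by blast
    then have "fmult (mono ?a) (fmult (mono [Vx ?u]) (mono ?b)) \<approx>
        fmult (mono ?a) (fmult (fsum (\<lambda>e. mono [Ed e, Gh e]) (out_edges ?u)) (mono ?b))"
      by (intro lpa_eq_fmult_left lpa_eq_fmult_right free_elem_mono a b)
    then show ?thesis by (simp only: fmult_mono_mono)
  qed
  also have "\<dots> = fsum (\<lambda>e. path_proj (path_snoc q e)) (out_edges ?u)"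
    unfolding fmult_fsum_left fmult_fsum_right fmult_mono_mono
    by (rule fsum_cong) (simp add: path_proj_mono path_snoc_def path_word_def qv)
  finally show ?thesis .
qed

lemma frontier_Suc:
  "frontier (Suc N) = {q \<in> frontier N. sink (path_range q)} \<union>
     (\<lambda>x. path_snoc (fst x) (snd x)) ` Sigma {q \<in> frontier N. \<not> sink (path_range q)}
       (\<lambda>q. out_edges (path_range q))"
  (is "_ = ?S \<union> ?X")
proof
  show "frontier (Suc N) \<subseteq> ?S \<union> ?X"
  proof
    fix q assume qN: "q \<in> frontier (Suc N)"
    obtain v es where qv: "q = (v, es)" by (cases q)
    have qp: "q \<in> paths E0 E1 r s" using qN frontier_paths by auto
    show "q \<in> ?S \<union> ?X"
    proof (cases "path_len q = Suc N")
      case True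
      then obtain es0 e where ese: "es = es0 @ [e]"
        using qv unfolding path_len_def by (metis length_0_conv nat.distinct(1) rev_exhaust snd_conv)
      have e: "e \<in> E1" using qp qv ese by (auto simp: paths_iff)
      have "(v, es0) \<in> paths E0 E1 r s" and range: "path_range (v, es0) = s e"
        using qp qv ese by (auto simp: paths_iff edge_chain_snoc path_range_def)
      then have "(v, es0) \<in> frontier N" "\<not> sink (path_range (v, es0))"
        using e True qv ese by (auto simp: frontier_def path_len_def sink_def)
      moreover have "e \<in> out_edges (path_range (v, es0))" using range e by (simp add: out_edges_def)
      moreover have "q = path_snoc (v, es0) e" using qv ese by (simp add: path_snoc_def)
      ultimately show ?thesis by (auto intro: image_eqI[where x="((v, es0), e)"])
    next
      case False
      then show ?thesis using qN unfolding frontier_def by auto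
    qed
  qed
  show "?S \<union> ?X \<subseteq> frontier (Suc N)"
  proof
    fix q assume "q \<in> ?S \<union> ?X"
    then show "q \<in> frontier (Suc N)"
    proof
      assume "q \<in> ?S" then show ?thesis unfolding frontier_def by auto
    next
      assume "q \<in> ?X"
      then obtain q0 e where "q0 \<in> frontier N" "\<not> sink (path_range q0)"
        "e \<in> out_edges (path_range q0)" "q = path_snoc q0 e"
        by auto
      then show ?thesis using path_snoc_paths[of q0 e]
        by (auto simp: frontier_def path_len_def path_snoc_def)
    qed
  qed
qed

lemma fsum_path_proj_frontier_Suc:
  "fsum path_proj (frontier N) \<approx> fsum path_proj (frontier (Suc N))"
proof -
  define S where "S = {q \<in> frontier N. sink (path_range q)}"
  define T where "T = {q \<in> frontier N. \<not> sink (path_range q)}"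
  define X where "X = Sigma T (\<lambda>q. out_edges (path_range q))"
  have fin: "finite S" "finite T" "finite X"
    unfolding S_def T_def X_def out_edges_def using finite_frontier finite_E1 by auto
  have len: "path_len q = N" if "q \<in> T" for q using that unfolding T_def frontier_def by auto
  have inj: "inj_on (\<lambda>x. path_snoc (fst x) (snd x)) X"
    unfolding inj_on_def path_snoc_def by (auto simp: prod_eq_iff)
  have disj: "S \<inter> (\<lambda>x. path_snoc (fst x) (snd x)) ` X = {}"
  proof -
    have "path_len q = Suc N" if "q \<in> (\<lambda>x. path_snoc (fst x) (snd x)) ` X" for q
      using that len unfolding X_def by (auto simp: path_snoc_def path_len_def)
    moreover have "path_len q \<le> N" if "q \<in> S" for q
      using that unfolding S_def frontier_def by auto
    ultimately show ?thesis by fastforce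
  qed
  have "frontier N = S \<union> T" "S \<inter> T = {}" unfolding S_def T_def by auto
  then have "fsum path_proj (frontier N) = fadd (fsum path_proj S) (fsum path_proj T)"
    using fsum_union[OF fin(1,2)] by simp
  also have "\<dots> \<approx> fadd (fsum path_proj S)
      (fsum (\<lambda>q. fsum (\<lambda>e. path_proj (path_snoc q e)) (out_edges (path_range q))) T)"
    by (intro lpa_eq_fadd lpa_eq_refl lpa_eq_fsum[OF fin(2)] path_proj_cuntz_krieger)
      (auto simp: T_def frontier_def)
  also have "fsum (\<lambda>q. fsum (\<lambda>e. path_proj (path_snoc q e)) (out_edges (path_range q))) T =
      fsum (\<lambda>x. path_proj (path_snoc (fst x) (snd x))) X"
    unfolding X_def by (rule fsum_Sigma[symmetric, OF fin(2)]) (simp add: out_edges_def finite_E1)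
  also have "\<dots> = fsum path_proj ((\<lambda>x. path_snoc (fst x) (snd x)) ` X)"
    by (rule fsum_reindex[OF inj, symmetric])
  also have "fadd (fsum path_proj S) \<dots> = fsum path_proj (frontier (Suc N))"
    unfolding frontier_Suc S_def[symmetric] T_def[symmetric] X_def[symmetric]
    by (rule fsum_union[symmetric, OF fin(1) finite_imageI[OF fin(3)] disj])
  finally show ?thesis .
qed

lemma frontier_partition_of_unit: "fsum path_proj (frontier N) \<approx> lpa_one E0"
proof (induction N)
  case 0
  have "frontier 0 = (\<lambda>v. (v, [])) ` E0"
    unfolding frontier_def path_len_def by (auto simp: paths_def)
  then have "fsum path_proj (frontier 0) = fsum (\<lambda>v. mono [Vx v, Vx v]) E0"
    by (simp add: fsum_reindex inj_on_def path_proj_mono path_word_def)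
  also have "\<dots> \<approx> lpa_one E0"
    unfolding lpa_one_def using finite_E0 rel_vertex_idem
    by (intro lpa_eq_fsum) (auto simp: lpa_eq_def intro: lpa_ideal.rel)
  finally show ?case .
next
  case (Suc N)
  then show ?case using lpa_eq_trans[OF lpa_eq_sym[OF fsum_path_proj_frontier_Suc]] by blast
qed

end

section \<open>A representation on tails of paths\<close>

lemma sum_case_option_regroup:
  fixes c :: "'w \<Rightarrow> complex" and F :: "'w \<Rightarrow> 't option" and h :: "'t \<Rightarrow> complex"
  assumes fin: "finite S"
  shows "(\<Sum>w\<in>S. c w * (case F w of None \<Rightarrow> 0 | Some t \<Rightarrow> h t)) =
         (\<Sum>t\<in>{t. \<exists>w\<in>S. F w = Some t}. h t * (\<Sum>w\<in>S. c w * of_bool (F w = Some t)))"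
proof -
  let ?T = "{t. \<exists>w\<in>S. F w = Some t}"
  have finT: "finite ?T"
    by (rule finite_subset[of _ "(\<lambda>w. the (F w)) ` S"]) (use fin in force)+
  have inner: "(\<Sum>t\<in>?T. h t * (c w * of_bool (F w = Some t))) =
      c w * (case F w of None \<Rightarrow> 0 | Some t \<Rightarrow> h t)" if "w \<in> S" for w
  proof (cases "F w")
    case (Some t0)
    have "t0 \<in> ?T" using that Some by auto
    have "(\<Sum>t\<in>?T. h t * (c w * of_bool (F w = Some t))) = (\<Sum>t\<in>?T. if t = t0 then h t0 * c w else 0)"
      by (intro sum.cong) (auto simp: Some)
    also have "\<dots> = h t0 * c w" using \<open>t0 \<in> ?T\<close> finT by (simp add: sum.delta)
    finally show ?thesis using Some by simp
  qed simp
  have "(\<Sum>t\<in>?T. h t * (\<Sum>w\<in>S. c w * of_bool (F w = Some t))) =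
      (\<Sum>w\<in>S. \<Sum>t\<in>?T. h t * (c w * of_bool (F w = Some t)))"
    by (simp add: sum_distrib_left sum.swap[of _ ?T])
  also have "\<dots> = (\<Sum>w\<in>S. c w * (case F w of None \<Rightarrow> 0 | Some t \<Rightarrow> h t))"
    by (rule sum.cong) (simp_all add: inner)
  finally show ?thesis by simp
qed

lemma cnj_of_bool [simp]: "cnj (of_bool b) = of_bool b"
  by (cases b) simp_all

lemma case_nat_comp_Suc [simp]: "case_nat a f \<circ> Suc = f"
  by (rule ext) simp

lemma case_nat_Some_comp_Suc: "f 0 = Some e \<Longrightarrow> case_nat (Some e) (f \<circ> Suc) = f"
  by (rule ext) (simp split: nat.split)

text \<open>A state \<open>((v, f), n)\<close> consists of a vertex \<open>v\<close>, a tail \<open>f\<close> listing the edges of a path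
  from \<open>v\<close> that is infinite or stops at a sink (then padded by \<open>None\<close>), and a counter \<open>n\<close>.
  Edges are prepended to the tail and ghost edges remove them; the counter records the net
  number of prepended edges, so that distinct paths send a state to distinct states even when
  the tail is periodic.\<close>

type_synonym ('v,'e) state = "('v \<times> (nat \<Rightarrow> 'e option)) \<times> int"

context leavitt
begin

fun act_gen :: "('v,'e) gen \<Rightarrow> ('v,'e) state \<Rightarrow> ('v,'e) state option" where
  "act_gen (Vx v) ((w, f), n) = (if w = v then Some ((w, f), n) else None)"
| "act_gen (Ed e) ((w, f), n) = (if w = r e then Some ((s e, case_nat (Some e) f), n + 1) else None)"
| "act_gen (Gh e) ((w, f), n) = (if f 0 = Some e then Some ((r e, f \<circ> Suc), n - 1) else None)"

fun act_word :: "('v,'e) gen list \<Rightarrow> ('v,'e) state \<Rightarrow> ('v,'e) state option" where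
  "act_word [] z = Some z"
| "act_word (g # w) z = (case act_word w z of None \<Rightarrow> None | Some t \<Rightarrow> act_gen g t)"

lemma act_word_append:
  "act_word (a @ b) z = (case act_word b z of None \<Rightarrow> None | Some t \<Rightarrow> act_word a t)"
  by (induction a) (auto split: option.splits)

fun valid_state :: "('v,'e) state \<Rightarrow> bool" where
  "valid_state ((v, f), n) \<longleftrightarrow>
     v \<in> E0 \<and> (\<forall>i e. f i = Some e \<longrightarrow> e \<in> E1) \<and> (\<forall>e. f 0 = Some e \<longrightarrow> s e = v) \<and>
     (\<forall>i e e'. f i = Some e \<longrightarrow> f (Suc i) = Some e' \<longrightarrow> r e = s e') \<and>
     (f 0 = None \<longrightarrow> sink v) \<and> (\<forall>i e. f i = Some e \<longrightarrow> f (Suc i) = None \<longrightarrow> sink (r e))"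

declare valid_state.simps [simp del]

lemma valid_state_act_gen:
  assumes g: "g \<in> G" and vz: "valid_state z" and a: "act_gen g z = Some t"
  shows "valid_state t"
proof -
  obtain v f n where z: "z = ((v, f), n)" by (cases z) auto
  have vs1: "v \<in> E0" and vs2: "\<And>i e. f i = Some e \<Longrightarrow> e \<in> E1"
    and vs3: "\<And>e. f 0 = Some e \<Longrightarrow> s e = v"
    and vs4: "\<And>i e e'. f i = Some e \<Longrightarrow> f (Suc i) = Some e' \<Longrightarrow> r e = s e'"
    and vs5: "f 0 = None \<Longrightarrow> sink v"
    and vs6: "\<And>i e. f i = Some e \<Longrightarrow> f (Suc i) = None \<Longrightarrow> sink (r e)"
    using vz unfolding z valid_state.simps by blast+
  show ?thesis
  proof (cases g)
    case (Vx x) then show ?thesis using a vz z by (simp split: if_splits)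
  next
    case (Ed e)
    have e: "e \<in> E1" using g Ed gensD by auto
    have t: "t = ((s e, case_nat (Some e) f), n + 1)" and v: "v = r e"
      using a Ed z by (simp_all split: if_splits)
    show ?thesis unfolding t valid_state.simps
    proof (intro conjI allI impI)
      show "s e \<in> E0" using e s_in_E0 by simp
      show "e' \<in> E1" if "case_nat (Some e) f i = Some e'" for i e'
        using that vs2 e by (cases i) auto
      show "r e1 = s e2" if "case_nat (Some e) f i = Some e1" "case_nat (Some e) f (Suc i) = Some e2"
        for i e1 e2 using that vs3 vs4 v by (cases i) auto
      show "sink (r e1)" if "case_nat (Some e) f i = Some e1" "case_nat (Some e) f (Suc i) = None"
        for i e1 using that vs5 vs6 v by (cases i) auto
    qed simp_all
  next
    case (Gh e)
    have t: "t = ((r e, f \<circ> Suc), n - 1)" and f0: "f 0 = Some e"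
      using a Gh z by (simp_all split: if_splits)
    have e: "e \<in> E1" using g Gh gensD by auto
    show ?thesis unfolding t valid_state.simps
      using e r_in_E0 vs2 vs4 vs6 vs4[of 0 e] vs6[of 0 e] f0 by simp
  qed
qed

lemma valid_state_act_word:
  "set w \<subseteq> G \<Longrightarrow> valid_state z \<Longrightarrow> act_word w z = Some t \<Longrightarrow> valid_state t"
proof (induction w arbitrary: t)
  case (Cons g w)
  then obtain m where m: "act_word w z = Some m" "act_gen g m = Some t"
    by (auto split: option.splits)
  then have "valid_state m" using Cons by simp
  then show ?case using valid_state_act_gen[OF _ _ m(2)] Cons.prems by simp
qed simp

text \<open>On valid states the ghost edge undoes the action of the edge and vice versa; this makes
  the representation a \<open>*\<close>-representation.\<close>

lemma act_gen_gstar: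
  assumes "valid_state z" and "valid_state t"
  shows "(act_gen (gstar g) t = Some z) = (act_gen g z = Some t)"
proof -
  obtain u f n where z: "z = ((u, f), n)" by (cases z) auto
  obtain u' f' n' where t: "t = ((u', f'), n')" by (cases t) auto
  show ?thesis
  proof (cases g)
    case (Vx v) then show ?thesis using z t by auto
  next
    case (Ed e)
    have "s e = u'" if "f' 0 = Some e" using assms(2) t that by (auto simp: valid_state.simps)
    then show ?thesis using z t Ed case_nat_Some_comp_Suc[of f' e] by auto
  next
    case (Gh e)
    have "s e = u" if "f 0 = Some e" using assms(1) z that by (auto simp: valid_state.simps)
    then show ?thesis using z t Gh case_nat_Some_comp_Suc[of f e] by auto
  qed
qed

lemma act_word_star:
  "set w \<subseteq> G \<Longrightarrow> valid_state z \<Longrightarrow> valid_state t \<Longrightarrow>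
   (act_word (rev (map gstar w)) t = Some z) = (act_word w z = Some t)"
proof (induction w arbitrary: t)
  case (Cons g w)
  have g: "g \<in> G" and w: "set w \<subseteq> G" using Cons.prems by auto
  have lhs: "act_word (rev (map gstar (g # w))) t =
      (case act_gen (gstar g) t of None \<Rightarrow> None | Some m \<Rightarrow> act_word (rev (map gstar w)) m)"
    by (simp add: act_word_append)
  show ?case
  proof
    assume "act_word (rev (map gstar (g # w))) t = Some z"
    then obtain m where m: "act_gen (gstar g) t = Some m" "act_word (rev (map gstar w)) m = Some z"
      unfolding lhs by (auto split: option.splits)
    have "valid_state m" using valid_state_act_gen[OF gstar_in_gens[OF g] Cons.prems(3) m(1)] .
    then show "act_word (g # w) z = Some t"
      using Cons.IH[OF w Cons.prems(2)] act_gen_gstar[OF _ Cons.prems(3)] m by simp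
  next
    assume "act_word (g # w) z = Some t"
    then obtain m where m: "act_word w z = Some m" "act_gen g m = Some t"
      by (auto split: option.splits)
    have vm: "valid_state m" using valid_state_act_word[OF w Cons.prems(2) m(1)] .
    have "act_word (rev (map gstar w)) m = Some z" using Cons.IH[OF w Cons.prems(2) vm] m(1) by simp
    moreover have "act_gen (gstar g) t = Some m" using act_gen_gstar[OF vm Cons.prems(3)] m(2) by simp
    ultimately show "act_word (rev (map gstar (g # w))) t = Some z" unfolding lhs by simp
  qed
qed auto

definition rep_coeff :: "('v,'e) fa \<Rightarrow> ('v,'e) state \<Rightarrow> ('v,'e) state \<Rightarrow> complex" where
  "rep_coeff p y z = (\<Sum>w\<in>fsupp p. p w * of_bool (act_word w z = Some y))"

lemma rep_coeff_superset:
  "finite S \<Longrightarrow> fsupp p \<subseteq> S \<Longrightarrow> rep_coeff p y z = (\<Sum>w\<in>S. p w * of_bool (act_word w z = Some y))"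
  unfolding rep_coeff_def by (rule sum.mono_neutral_left) (auto simp: fsupp_def)

lemma rep_coeff_zero: "rep_coeff Z y z = 0"
  unfolding rep_coeff_def fsupp_def by simp

lemma rep_coeff_mono: "rep_coeff (mono w) y z = of_bool (act_word w z = Some y)"
  unfolding rep_coeff_def fsupp_mono by (simp add: mono_def)

lemma rep_coeff_fdiff:
  "finite (fsupp p) \<Longrightarrow> finite (fsupp q) \<Longrightarrow> rep_coeff (fdiff p q) y z = rep_coeff p y z - rep_coeff q y z"
  using fsupp_fdiff[of p q]
  by (subst (1 2 3) rep_coeff_superset[where S="fsupp p \<union> fsupp q"])
    (auto simp: fdiff_def sum_subtractf left_diff_distrib)

lemma rep_coeff_fadd:
  "finite (fsupp p) \<Longrightarrow> finite (fsupp q) \<Longrightarrow> rep_coeff (fadd p q) y z = rep_coeff p y z + rep_coeff q y z"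
  using fsupp_fadd[of p q]
  by (subst (1 2 3) rep_coeff_superset[where S="fsupp p \<union> fsupp q"])
    (auto simp: fadd_def sum.distrib distrib_right)

lemma rep_coeff_fsmult: "finite (fsupp p) \<Longrightarrow> rep_coeff (fsmult c p) y z = c * rep_coeff p y z"
  using fsupp_fsmult[of c p]
  by (subst (1 2) rep_coeff_superset[where S="fsupp p"])
    (auto simp: fsmult_def sum_distrib_left mult.assoc[symmetric])

lemma rep_coeff_fsum:
  "finite A \<Longrightarrow> (\<And>i. i \<in> A \<Longrightarrow> finite (fsupp (f i))) \<Longrightarrow>
   rep_coeff (fsum f A) y z = (\<Sum>i\<in>A. rep_coeff (f i) y z)"
proof (induction A rule: finite_induct)
  case empty then show ?case by (simp add: fsum_def rep_coeff_zero)
next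
  case (insert x F) then show ?case by (simp add: fsum_insert rep_coeff_fadd finite_fsupp_fsum)
qed

lemma rep_coeff_fmult_mono_left:
  assumes "finite (fsupp p)"
  shows "rep_coeff (fmult (mono v) p) y z = (\<Sum>w\<in>fsupp p. p w * of_bool (act_word (v @ w) z = Some y))"
proof -
  have "rep_coeff (fmult (mono v) p) y z =
      (\<Sum>w\<in>(\<lambda>w. v @ w) ` fsupp p. fmult (mono v) p w * of_bool (act_word w z = Some y))"
    by (rule rep_coeff_superset[OF _ fsupp_fmult_mono_left]) (use assms in simp)
  also have "\<dots> = (\<Sum>w\<in>fsupp p. p w * of_bool (act_word (v @ w) z = Some y))"
    by (subst sum.reindex) (simp_all add: inj_on_def fmult_mono_left)
  finally show ?thesis .
qed

lemma rep_coeff_fmult_mono_right: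
  assumes "finite (fsupp p)"
  shows "rep_coeff (fmult p (mono v)) y z = (case act_word v z of None \<Rightarrow> 0 | Some t \<Rightarrow> rep_coeff p y t)"
proof -
  have "rep_coeff (fmult p (mono v)) y z =
      (\<Sum>w\<in>(\<lambda>w. w @ v) ` fsupp p. fmult p (mono v) w * of_bool (act_word w z = Some y))"
    by (rule rep_coeff_superset[OF _ fsupp_fmult_mono_right]) (use assms in simp)
  also have "\<dots> = (\<Sum>w\<in>fsupp p. p w * of_bool (act_word (w @ v) z = Some y))"
    by (subst sum.reindex) (simp_all add: inj_on_def fmult_mono_right)
  also have "\<dots> = (case act_word v z of None \<Rightarrow> 0 | Some t \<Rightarrow> rep_coeff p y t)"
    by (cases "act_word v z") (simp_all add: act_word_append rep_coeff_def)
  finally show ?thesis .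
qed

lemma rep_coeff_cuntz_krieger:
  assumes v: "v \<in> E0" and ne: "{e\<in>E1. s e = v} \<noteq> {}" and vz: "valid_state z"
  shows "rep_coeff (fdiff (mono [Vx v]) (fsum (\<lambda>e. mono [Ed e, Gh e]) {e\<in>E1. s e = v})) y z = 0"
proof -
  let ?A = "{e\<in>E1. s e = v}"
  have finA: "finite ?A" using finite_E1 by simp
  obtain u f n where z: "z = ((u, f), n)" by (cases z) auto
  have vs: "u \<in> E0" "\<And>i e. f i = Some e \<Longrightarrow> e \<in> E1" "\<And>e. f 0 = Some e \<Longrightarrow> s e = u"
    "f 0 = None \<Longrightarrow> sink u" using vz z by (auto simp: valid_state.simps)
  have act: "act_word [Ed e, Gh e] z = (if f 0 = Some e then Some z else None)" for e
    using z vs(3) case_nat_Some_comp_Suc[of f e] by auto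
  have "rep_coeff (fsum (\<lambda>e. mono [Ed e, Gh e]) ?A) y z = (\<Sum>e\<in>?A. rep_coeff (mono [Ed e, Gh e]) y z)"
    by (rule rep_coeff_fsum[OF finA]) (simp add: fsupp_mono)
  also have "\<dots> = (\<Sum>e\<in>?A. of_bool (f 0 = Some e \<and> y = z))"
    by (rule sum.cong[OF refl]) (simp only: rep_coeff_mono act, auto)
  also have "\<dots> = of_bool (u = v \<and> y = z)"
  proof (cases "f 0")
    case None
    then have "u \<noteq> v" using vs(4) ne sink_def by auto
    then show ?thesis using None by simp
  next
    case (Some e0)
    have "e0 \<in> E1" "s e0 = u" using vs Some by auto
    then have "(\<Sum>e\<in>?A. of_bool (f 0 = Some e \<and> y = z)) = (\<Sum>e\<in>?A. if e = e0 then of_bool (y = z) else 0)"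
      using Some by (intro sum.cong) auto
    also have "\<dots> = of_bool (u = v \<and> y = z)"
      using finA \<open>e0 \<in> E1\<close> \<open>s e0 = u\<close> by (auto simp: sum.delta)
    finally show ?thesis .
  qed
  finally have "rep_coeff (fsum (\<lambda>e. mono [Ed e, Gh e]) ?A) y z = of_bool (u = v \<and> y = z)" .
  moreover have "rep_coeff (mono [Vx v]) y z = of_bool (u = v \<and> y = z)"
    using z by (auto simp: rep_coeff_mono)
  moreover have "finite (fsupp (fsum (\<lambda>e. mono [Ed e, Gh e]) ?A))"
    using finA by (intro finite_fsupp_fsum) (auto simp: fsupp_mono)
  ultimately show ?thesis by (subst rep_coeff_fdiff) (simp_all add: fsupp_mono)
qed

lemma lpa_relations_rep_coeff:
  "g \<in> lpa_relations E0 E1 r s \<Longrightarrow> finite (fsupp g) \<and> (\<forall>y z. valid_state z \<longrightarrow> rep_coeff g y z = 0)"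
  unfolding lpa_relations_def Un_iff mem_Collect_eq
  apply (elim disjE exE conjE)
          apply (simp_all add: fsupp_mono rep_coeff_mono rep_coeff_fdiff finite_fsupp_fdiff_mono
      split: prod.splits)
   apply (auto simp: valid_state.simps)[1]
  using finite_E1 rep_coeff_cuntz_krieger
  by (auto intro!: finite_subset[OF fsupp_fdiff] finite_fsupp_fsum simp: fsupp_mono)

lemma ideal_rep_coeff:
  "p \<in> I \<Longrightarrow> finite (fsupp p) \<and> (\<forall>y z. valid_state z \<longrightarrow> rep_coeff p y z = 0)"
proof (induction rule: lpa_ideal.induct)
  case zero then show ?case by (simp add: rep_coeff_zero fsupp_def)
next
  case (rel g) then show ?case by (rule lpa_relations_rep_coeff)
next
  case (add p q)
  then show ?case using fsupp_fadd[of p q] by (auto simp: rep_coeff_fadd intro: finite_subset)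
next
  case (smult c p)
  then show ?case using fsupp_fsmult[of c p] by (auto simp: rep_coeff_fsmult intro: finite_subset)
next
  case (lmult x p)
  have "rep_coeff (fmult (mono [x]) p) y z = 0" if "valid_state z" for y z
  proof -
    have "of_bool (act_word ([x] @ w) z = Some y) =
        (case act_word w z of None \<Rightarrow> 0 :: complex | Some t \<Rightarrow> of_bool (act_gen x t = Some y))" for w
      by (cases "act_word w z") simp_all
    then have "rep_coeff (fmult (mono [x]) p) y z = (\<Sum>w\<in>fsupp p. p w *
        (case act_word w z of None \<Rightarrow> 0 | Some t \<Rightarrow> of_bool (act_gen x t = Some y)))"
      using lmult by (simp only: rep_coeff_fmult_mono_left)
    also have "\<dots> = (\<Sum>t\<in>{t. \<exists>w\<in>fsupp p. act_word w z = Some t}.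
        of_bool (act_gen x t = Some y) * rep_coeff p t z)"
      using lmult by (subst sum_case_option_regroup) (auto simp: rep_coeff_def)
    finally show ?thesis using lmult.IH that by simp
  qed
  then show ?case
    using lmult fsupp_fmult_mono_left[of "[x]" p] by (auto intro: finite_subset)
next
  case (rmult x p)
  have "rep_coeff (fmult p (mono [x])) y z = 0" if "valid_state z" for y z
  proof (cases "act_gen x z")
    case (Some t)
    then have "valid_state t" using valid_state_act_gen[OF rmult(1) that] by simp
    then have "rep_coeff p y t = 0" using rmult.IH by blast
    then show ?thesis using rmult.IH rep_coeff_fmult_mono_right[of p "[x]"] Some by simp
  qed (use rmult.IH rep_coeff_fmult_mono_right[of p "[x]"] in simp)
  then show ?case
    using rmult fsupp_fmult_mono_right[of p "[x]"] by (auto intro: finite_subset)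
qed

lemma lpa_eq_rep_coeff:
  "finite (fsupp p) \<Longrightarrow> finite (fsupp q) \<Longrightarrow> p \<approx> q \<Longrightarrow> valid_state z \<Longrightarrow>
   rep_coeff p y z = rep_coeff q y z"
proof -
  assume "finite (fsupp p)" "finite (fsupp q)" "p \<approx> q" "valid_state z"
  moreover have "rep_coeff (fdiff p q) y z = 0"
    using ideal_rep_coeff[of "fdiff p q"] calculation unfolding lpa_eq_def by blast
  ultimately show ?thesis using rep_coeff_fdiff[of p q y z] by simp
qed

lemma rep_coeff_lpa_one: "valid_state z \<Longrightarrow> rep_coeff (lpa_one E0) y z = of_bool (y = z)"
proof -
  assume vz: "valid_state z"
  obtain u f n where z: "z = ((u, f), n)" by (cases z) auto
  have u: "u \<in> E0" using vz z by (simp add: valid_state.simps)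
  have "rep_coeff (lpa_one E0) y z = (\<Sum>v\<in>E0. rep_coeff (mono [Vx v]) y z)"
    unfolding lpa_one_def by (rule rep_coeff_fsum[OF finite_E0]) (simp add: fsupp_mono)
  also have "\<dots> = (\<Sum>v\<in>E0. if v = u then of_bool (y = z) else 0)"
    by (rule sum.cong[OF refl]) (auto simp: rep_coeff_mono z)
  also have "\<dots> = of_bool (y = z)" using u finite_E0 by (simp add: sum.delta)
  finally show ?thesis .
qed

end

lemma sum_cnj_mult_indicator:
  fixes a :: "'w \<Rightarrow> complex" and F :: "'w \<Rightarrow> 't option"
  assumes T: "finite T" "{t. \<exists>w\<in>S. F w = Some t} \<subseteq> T"
  shows "(\<Sum>t\<in>T. cnj (\<Sum>v\<in>S. a v * of_bool (F v = Some t)) * (\<Sum>w\<in>S. a w * of_bool (F w = Some t))) =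
    (\<Sum>v\<in>S. cnj (a v) * (\<Sum>w\<in>S. a w * of_bool (\<exists>t. F w = Some t \<and> F v = Some t)))"
proof -
  have inner: "(\<Sum>t\<in>T. of_bool (F v = Some t) * of_bool (F w = Some t)) =
      (of_bool (\<exists>t. F w = Some t \<and> F v = Some t) :: complex)" if w: "w \<in> S" for v w
  proof (cases "F w")
    case (Some t0)
    have "t0 \<in> T" using w Some T(2) by auto
    have "(\<Sum>t\<in>T. of_bool (F v = Some t) * of_bool (F w = Some t)) =
        (\<Sum>t\<in>T. if t = t0 then of_bool (F v = Some t0) else (0::complex))"
      by (rule sum.cong) (auto simp: Some)
    also have "\<dots> = of_bool (F v = Some t0)" using \<open>t0 \<in> T\<close> T(1) by (simp add: sum.delta)
    finally show ?thesis using Some by simp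
  qed simp
  have "(\<Sum>t\<in>T. cnj (\<Sum>v\<in>S. a v * of_bool (F v = Some t)) * (\<Sum>w\<in>S. a w * of_bool (F w = Some t))) =
     (\<Sum>t\<in>T. \<Sum>v\<in>S. \<Sum>w\<in>S. cnj (a v) * a w * (of_bool (F v = Some t) * of_bool (F w = Some t)))"
    by (simp add: sum_distrib_left sum_distrib_right mult_ac del: sum_mult_of_bool_eq)
  also have "\<dots> = (\<Sum>v\<in>S. \<Sum>w\<in>S. \<Sum>t\<in>T. cnj (a v) * a w *
      (of_bool (F v = Some t) * of_bool (F w = Some t)))"
    by (simp add: sum.swap[of _ T] del: sum_mult_of_bool_eq)
  also have "\<dots> = (\<Sum>v\<in>S. \<Sum>w\<in>S. cnj (a v) * a w * of_bool (\<exists>t. F w = Some t \<and> F v = Some t))"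
    by (intro sum.cong refl) (simp only: sum_distrib_left[symmetric] inner)
  also have "\<dots> = (\<Sum>v\<in>S. cnj (a v) * (\<Sum>w\<in>S. a w * of_bool (\<exists>t. F w = Some t \<and> F v = Some t)))"
    by (simp add: sum_distrib_left mult_ac del: sum_mult_of_bool_eq)
  finally show ?thesis .
qed

context leavitt
begin

lemma act_word_star_append:
  assumes v: "set v \<subseteq> G" and w: "set w \<subseteq> G" and z: "valid_state z"
  shows "act_word (rev (map gstar v) @ w) z = Some z \<longleftrightarrow>
    (\<exists>t. act_word w z = Some t \<and> act_word v z = Some t)"
proof (cases "act_word w z")
  case (Some t)
  have "valid_state t" using valid_state_act_word[OF w z Some] .
  then show ?thesis using act_word_star[OF v z] Some by (simp add: act_word_append)
qed (simp add: act_word_append)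

lemma rep_coeff_fstar_fmult_diag:
  assumes u: "free_elem u" and vz: "valid_state z"
  shows "rep_coeff (fmult (fstar u) u) z z =
     (\<Sum>t\<in>{t. \<exists>w\<in>fsupp u. act_word w z = Some t}. cnj (rep_coeff u t z) * rep_coeff u t z)"
proof -
  define S where "S = fsupp u"
  define st where "st = (\<lambda>w::('v,'e) gen list. rev (map gstar w))"
  have finS: "finite S" using u unfolding free_elem_def S_def by simp
  have SG: "w \<in> S \<Longrightarrow> set w \<subseteq> G" for w using u unfolding free_elem_def S_def fsupp_def by auto
  have inj: "inj_on st S" unfolding st_def inj_on_def by (metis rev_map_gstar_involutive)
  have finT: "finite {t. \<exists>w\<in>S. act_word w z = Some t}"
    by (rule finite_subset[of _ "(\<lambda>w. the (act_word w z)) ` S"]) (use finS in force)+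
  have finfs: "finite (fsupp (fmult (mono v) u))" for v
    by (rule finite_subset[OF fsupp_fmult_mono_left]) (use finS in \<open>simp add: S_def\<close>)
  have "fmult (fstar u) u = fsum (\<lambda>v. fsmult (fstar u v) (fmult (mono v) u)) (st ` S)"
    by (rule fmult_expand_left) (use finS in \<open>auto simp: fsupp_fstar S_def st_def\<close>)
  then have "rep_coeff (fmult (fstar u) u) z z =
      (\<Sum>v\<in>st ` S. fstar u v * rep_coeff (fmult (mono v) u) z z)"
    using finS finite_subset[OF fsupp_fsmult finfs] by (simp add: rep_coeff_fsum rep_coeff_fsmult finfs)
  also have "\<dots> = (\<Sum>v\<in>S. cnj (u v) * (\<Sum>w\<in>S. u w * of_bool (act_word (st v @ w) z = Some z)))"
    by (subst sum.reindex[OF inj])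
      (simp add: rep_coeff_fmult_mono_left finS[unfolded S_def] S_def st_def fstar_def)
  also have "\<dots> = (\<Sum>v\<in>S. cnj (u v) *
      (\<Sum>w\<in>S. u w * of_bool (\<exists>t. act_word w z = Some t \<and> act_word v z = Some t)))"
    unfolding st_def using act_word_star_append[OF SG SG vz] by simp
  also have "\<dots> = (\<Sum>t\<in>{t. \<exists>w\<in>S. act_word w z = Some t}. cnj (rep_coeff u t z) * rep_coeff u t z)"
    unfolding rep_coeff_def S_def[symmetric]
    by (rule sum_cnj_mult_indicator[symmetric, OF finT]) simp
  finally show ?thesis unfolding S_def .
qed

lemma unitary_rep_coeff_norm:
  assumes u: "free_elem u" and unitary: "fmult (fstar u) u \<approx> lpa_one E0" and vz: "valid_state z"
  shows "(\<Sum>t\<in>{t. \<exists>w\<in>fsupp u. act_word w z = Some t}. (cmod (rep_coeff u t z))\<^sup>2) = 1"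
proof -
  let ?T = "{t. \<exists>w\<in>fsupp u. act_word w z = Some t}"
  have "free_elem (fmult (fstar u) u)" using u by (simp add: free_elem_fmult free_elem_fstar)
  then have "rep_coeff (fmult (fstar u) u) z z = rep_coeff (lpa_one E0) z z"
    using lpa_eq_rep_coeff[OF _ _ unitary vz] free_elem_lpa_one unfolding free_elem_def by blast
  then have "(\<Sum>t\<in>?T. cnj (rep_coeff u t z) * rep_coeff u t z) = 1"
    using rep_coeff_fstar_fmult_diag[OF u vz] rep_coeff_lpa_one[OF vz] by simp
  moreover have "(\<Sum>t\<in>?T. cnj (rep_coeff u t z) * rep_coeff u t z) =
      complex_of_real (\<Sum>t\<in>?T. (cmod (rep_coeff u t z))\<^sup>2)"
    unfolding of_real_sum by (rule sum.cong[OF refl]) (metis complex_norm_square mult.commute)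
  ultimately have "complex_of_real (\<Sum>t\<in>?T. (cmod (rep_coeff u t z))\<^sup>2) = 1" by simp
  then show ?thesis by (simp only: of_real_eq_1_iff)
qed

end

definition prepend :: "'e list \<Rightarrow> (nat \<Rightarrow> 'e option) \<Rightarrow> nat \<Rightarrow> 'e option" where
  "prepend es f = (\<lambda>i. if i < length es then Some (es ! i) else f (i - length es))"

lemma prepend_Cons: "prepend (e # es) f = case_nat (Some e) (prepend es f)"
  unfolding prepend_def by (rule ext) (auto split: nat.split)

lemma prepend_Nil: "prepend [] f = f"
  unfolding prepend_def by simp

context leavitt
begin

definition path_state :: "('v,'e) path \<Rightarrow> ('v,'e) state \<Rightarrow> ('v,'e) state" where
  "path_state p z = ((fst p, prepend (snd p) (snd (fst z))), snd z + int (length (snd p)))"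

lemma act_word_edges:
  "edge_chain r s es \<Longrightarrow> es \<noteq> [] \<Longrightarrow> r (last es) = fst (fst z) \<Longrightarrow>
   act_word (map Ed es) z = Some ((s (hd es), prepend es (snd (fst z))), snd z + int (length es))"
proof (induction es)
  case (Cons e es)
  obtain w f n where z: "z = ((w, f), n)" by (cases z) auto
  show ?case
  proof (cases "es = []")
    case True
    then show ?thesis using Cons.prems z by (simp add: prepend_Cons prepend_Nil)
  next
    case False
    have "edge_chain r s es" "r e = s (hd es)"
      using Cons.prems(1) False by (simp_all add: edge_chain_Cons)
    moreover have "r (last es) = fst (fst z)" using Cons.prems(3) False by simp
    ultimately show ?thesis using Cons.IH False z by (simp add: prepend_Cons add.assoc)
  qed
qed simp

lemma act_word_path:
  assumes "p \<in> paths E0 E1 r s" "path_range p = fst (fst z)"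
  shows "act_word (path_word p) z = Some (path_state p z)"
proof -
  obtain v es where p: "p = (v, es)" by (cases p)
  obtain w f n where z: "z = ((w, f), n)" by (cases z) auto
  show ?thesis
  proof (cases "es = []")
    case True
    then show ?thesis using assms p z by (simp add: path_word_def path_range_def path_state_def prepend_Nil)
  next
    case False
    then have "edge_chain r s es" "s (hd es) = v" using assms(1) p by (auto simp: paths_iff)
    then show ?thesis using act_word_edges[of es z] assms(2) p z False
      by (simp add: path_word_def path_range_def path_state_def)
  qed
qed

lemma path_state_inj:
  assumes "path_state p z = path_state p' z"
  shows "p = p'"
proof -
  obtain v es where p: "p = (v, es)" by (cases p)
  obtain v' es' where p': "p' = (v', es')" by (cases p')
  have v: "v = v'" and l: "length es = length es'"
    and pe: "prepend es (snd (fst z)) = prepend es' (snd (fst z))"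
    using assms p p' by (auto simp: path_state_def)
  have "es = es'"
  proof (rule nth_equalityI[OF l])
    fix i assume "i < length es"
    then have "prepend es (snd (fst z)) i = Some (es ! i)" "prepend es' (snd (fst z)) i = Some (es' ! i)"
      using l by (auto simp: prepend_def)
    then show "es ! i = es' ! i" using pe by simp
  qed
  then show ?thesis using v p p' by simp
qed

text \<open>Follow an arbitrarily chosen outgoing edge until a sink is reached (possibly forever).\<close>

lemma valid_state_exists:
  assumes v: "v \<in> E0"
  shows "\<exists>f. valid_state ((v, f), 0)"
proof -
  define next_edge where
    "next_edge x = (if \<exists>e\<in>E1. s e = x then Some (SOME e. e \<in> E1 \<and> s e = x) else None)" for x
  define step where "step x = (case next_edge x of None \<Rightarrow> x | Some e \<Rightarrow> r e)" for x
  have some: "e \<in> E1 \<and> s e = x" if "next_edge x = Some e" for x e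
    using that unfolding next_edge_def by (auto split: if_splits intro: someI2_ex)
  have none: "sink x" if "next_edge x = None" for x
    using that unfolding next_edge_def sink_def by (auto split: if_splits)
  have "valid_state ((v, \<lambda>i. next_edge ((step ^^ i) v)), 0)"
    unfolding valid_state.simps
  proof (intro conjI allI impI)
    fix i e e' assume "next_edge ((step ^^ i) v) = Some e" "next_edge ((step ^^ Suc i) v) = Some e'"
    then show "r e = s e'" using some[of _ e'] by (simp add: step_def)
  next
    fix i e assume "next_edge ((step ^^ i) v) = Some e" "next_edge ((step ^^ Suc i) v) = None"
    then show "sink (r e)" using none by (simp add: step_def)
  qed (use v some none in auto)
  then show ?thesis by blast
qed

end

section \<open>Unitaries\<close>

lemma sum_norm_reindex:
  fixes f :: "'t \<Rightarrow> complex" and \<mu> :: "'p \<Rightarrow> complex"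
  assumes T: "finite T" and Q: "finite Q" and inj: "inj_on h Q"
    and outside: "\<And>t. t \<notin> T \<Longrightarrow> f t = 0"
    and f: "\<And>t. f t = (\<Sum>p\<in>Q. \<mu> p * of_bool (h p = t))"
  shows "(\<Sum>t\<in>T. (cmod (f t))\<^sup>2) = (\<Sum>p\<in>Q. (cmod (\<mu> p))\<^sup>2)"
proof -
  have f_h: "f (h p) = \<mu> p" if "p \<in> Q" for p
  proof -
    have "f (h p) = (\<Sum>p'\<in>Q. if p' = p then \<mu> p else 0)"
      unfolding f using inj that by (intro sum.cong refl) (auto simp: inj_on_def)
    then show ?thesis using Q that by simp
  qed
  have "(\<Sum>t\<in>T. (cmod (f t))\<^sup>2) = (\<Sum>t\<in>T \<union> h ` Q. (cmod (f t))\<^sup>2)"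
    by (rule sum.mono_neutral_left) (use T Q outside in auto)
  also have "\<dots> = (\<Sum>t\<in>h ` Q. (cmod (f t))\<^sup>2)"
    by (rule sum.mono_neutral_right) (use T Q f in \<open>auto intro!: sum.neutral\<close>)
  also have "\<dots> = (\<Sum>p\<in>Q. (cmod (\<mu> p))\<^sup>2)"
    by (simp add: sum.reindex[OF inj] f_h)
  finally show ?thesis .
qed

lemma ess_unique_partition_of_unitE:
  assumes ess: "ess_unique_partition_of_unit R" and Q: "finite Q"
    and R: "\<And>p. p \<in> Q \<Longrightarrow> \<mu> p \<in> R" and norm: "(\<Sum>p\<in>Q. (cmod (\<mu> p))\<^sup>2) = 1"
  obtains p0 where "p0 \<in> Q" "cmod (\<mu> p0) = 1" "\<And>p. p \<in> Q \<Longrightarrow> p \<noteq> p0 \<Longrightarrow> \<mu> p = 0"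
proof -
  obtain h where h: "bij_betw h {..<card Q} Q"
    using ex_bij_betw_nat_finite[OF Q] by (auto simp: atLeast0LessThan)
  have "(\<Sum>i<card Q. (cmod (\<mu> (h i)))\<^sup>2) = 1"
    using sum.reindex_bij_betw[OF h, of "\<lambda>p. (cmod (\<mu> p))\<^sup>2"] norm by simp
  moreover have "\<mu> (h i) \<in> R" if "i < card Q" for i
    using R h that unfolding bij_betw_def by auto
  ultimately obtain j where j: "j < card Q" "\<And>i. i < card Q \<Longrightarrow> i \<noteq> j \<Longrightarrow> \<mu> (h i) = 0"
    using ess[unfolded ess_unique_partition_of_unit_def, rule_format, of "card Q" "\<lambda>i. \<mu> (h i)"]
    by blast
  have p0: "h j \<in> Q" using h j(1) unfolding bij_betw_def by auto
  have zero: "\<mu> p = 0" if p: "p \<in> Q" "p \<noteq> h j" for p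
  proof -
    obtain i where "i < card Q" "p = h i" using p(1) h unfolding bij_betw_def by auto
    then show ?thesis using p(2) j(2) by blast
  qed
  have "(\<Sum>p\<in>Q. (cmod (\<mu> p))\<^sup>2) = (\<Sum>p\<in>Q. if p = h j then (cmod (\<mu> (h j)))\<^sup>2 else 0)"
    by (rule sum.cong[OF refl]) (auto simp: zero)
  then have "(cmod (\<mu> (h j)))\<^sup>2 = 1" using p0 Q norm by simp
  then have "cmod (\<mu> (h j)) = 1"
    using norm_ge_zero[of "\<mu> (h j)"] by (simp add: power2_eq_1_iff)
  then show ?thesis using that p0 zero by blast
qed

context leavitt
begin

lemma free_elem_times_path:
  assumes u: "free_elem u" and q: "q \<in> paths E0 E1 r s"
    and ghosts: "\<And>w. w \<in> fsupp u \<Longrightarrow> ghost_count w \<le> path_len q \<or> sink (path_range q)"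
  obtains Q \<mu> where "finite Q" "\<And>p. p \<in> Q \<Longrightarrow> p \<in> paths E0 E1 r s \<and> path_range p = path_range q"
    "\<And>p. \<mu> p \<in> R" "fmult u (path_elt q) \<approx> fsum (\<lambda>p. fsmult (\<mu> p) (path_elt p)) Q"
proof -
  define S where "S = fsupp u"
  have finS: "finite S" using u unfolding free_elem_def S_def by simp
  have SG: "set w \<subseteq> G" if "w \<in> S" for w using u that unfolding free_elem_def S_def fsupp_def by blast
  have uR: "u w \<in> R" for w using u unfolding free_elem_def by blast
  define S1 where "S1 = {w \<in> S. \<exists>q'. path_reduct w q q'}"
  define red where "red w = (SOME q'. path_reduct w q q')" for w
  have red: "path_reduct w q (red w)" if "w \<in> S1" for w
    using that unfolding S1_def red_def by (blast intro: someI_ex)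
  define Q where "Q = red ` S1"
  define \<mu> where "\<mu> p = (\<Sum>w\<in>{w \<in> S1. red w = p}. u w)" for p
  have finS1: "finite S1" using finS unfolding S1_def by simp
  have "fmult u (path_elt q) = fsum (\<lambda>w. fsmult (u w) (mono (w @ path_word q))) S"
    unfolding path_elt_eq_mono
    by (subst fmult_expand_left[OF finS]) (simp_all add: S_def fmult_mono_mono)
  also have "\<dots> \<approx> fsum (\<lambda>w. fsmult (u w) (if w \<in> S1 then path_elt (red w) else Z)) S"
  proof (rule lpa_eq_fsum[OF finS], rule lpa_eq_fsmult[OF uR])
    fix w assume w: "w \<in> S"
    show "mono (w @ path_word q) \<approx> (if w \<in> S1 then path_elt (red w) else Z)"
      using red word_times_path[OF SG[OF w] q ghosts[folded S_def, OF w]] w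
      by (auto simp: S1_def path_reduct_def path_elt_eq_mono)
  qed
  also have "\<dots> = fsum (\<lambda>p. fsmult (\<mu> p) (path_elt p)) Q"
  proof
    fix x
    have "(\<Sum>w\<in>S. u w * (if w \<in> S1 then path_elt (red w) else Z) x) =
        (\<Sum>w\<in>S1. u w * path_elt (red w) x)"
      by (rule sum.mono_neutral_cong_right) (use finS in \<open>auto simp: S1_def\<close>)
    also have "\<dots> = (\<Sum>p\<in>Q. \<Sum>w\<in>{w \<in> S1. red w = p}. u w * path_elt (red w) x)"
      unfolding Q_def by (rule sum.image_gen[OF finS1])
    also have "\<dots> = (\<Sum>p\<in>Q. \<mu> p * path_elt p x)"
      unfolding \<mu>_def sum_distrib_right by (intro sum.cong refl) auto
    finally show "fsum (\<lambda>w. fsmult (u w) (if w \<in> S1 then path_elt (red w) else Z)) S x =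
        fsum (\<lambda>p. fsmult (\<mu> p) (path_elt p)) Q x"
      unfolding fsum_def fsmult_def .
  qed
  finally have "fmult u (path_elt q) \<approx> fsum (\<lambda>p. fsmult (\<mu> p) (path_elt p)) Q" .
  moreover have "p \<in> paths E0 E1 r s \<and> path_range p = path_range q" if "p \<in> Q" for p
    using that red unfolding Q_def path_reduct_def by blast
  moreover have "\<mu> p \<in> R" for p unfolding \<mu>_def by (rule R_sum[OF uR])
  moreover have "finite Q" unfolding Q_def using finS1 by simp
  ultimately show ?thesis using that by blast
qed

lemma rep_coeff_path_combination:
  assumes "finite Q" and Q: "\<And>p. p \<in> Q \<Longrightarrow> p \<in> paths E0 E1 r s \<and> path_range p = fst (fst z)"
  shows "rep_coeff (fsum (\<lambda>p. fsmult (\<mu> p) (path_elt p)) Q) y z =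
    (\<Sum>p\<in>Q. \<mu> p * of_bool (path_state p z = y))"
proof -
  have fin: "finite (fsupp (fsmult (\<mu> p) (path_elt p)))" for p
    by (rule finite_subset[OF fsupp_fsmult]) (simp add: path_elt_eq_mono fsupp_mono)
  have "rep_coeff (fsum (\<lambda>p. fsmult (\<mu> p) (path_elt p)) Q) y z =
      (\<Sum>p\<in>Q. rep_coeff (fsmult (\<mu> p) (path_elt p)) y z)"
    by (rule rep_coeff_fsum[OF assms(1) fin])
  also have "\<dots> = (\<Sum>p\<in>Q. \<mu> p * of_bool (path_state p z = y))"
  proof (rule sum.cong[OF refl])
    fix p assume "p \<in> Q"
    then have "act_word (path_word p) z = Some (path_state p z)" using Q by (intro act_word_path) auto
    then show "rep_coeff (fsmult (\<mu> p) (path_elt p)) y z = \<mu> p * of_bool (path_state p z = y)"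
      by (simp add: rep_coeff_fsmult path_elt_eq_mono fsupp_mono rep_coeff_mono)
  qed
  finally show ?thesis .
qed

text \<open>Evaluating at a state whose tail starts at the range of \<open>q\<close> turns \<open>u q = \<Sum> \<mu>\<^sub>p p\<close>
  into a column of \<open>u\<close>, which is a unit vector since \<open>u\<^sup>* u = 1\<close>; the states reached by
  distinct paths are distinct.\<close>

lemma path_combination_norm:
  assumes u: "free_elem u" and unitary: "fmult (fstar u) u \<approx> lpa_one E0"
    and q: "q \<in> paths E0 E1 r s" and Q: "finite Q"
    and QR: "\<And>p. p \<in> Q \<Longrightarrow> p \<in> paths E0 E1 r s \<and> path_range p = path_range q"
    and eq: "fmult u (path_elt q) \<approx> fsum (\<lambda>p. fsmult (\<mu> p) (path_elt p)) Q"
  shows "(\<Sum>p\<in>Q. (cmod (\<mu> p))\<^sup>2) = 1"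
proof -
  define X where "X = fsum (\<lambda>p. fsmult (\<mu> p) (path_elt p)) Q"
  obtain f where vz0: "valid_state ((path_range q, f), 0)"
    using valid_state_exists[OF path_range_in_E0[OF q]] by blast
  define z0 :: "('v,'e) state" where "z0 = ((path_range q, f), 0)"
  define z where "z = path_state q z0"
  have act: "act_word (path_word q) z0 = Some z"
    unfolding z_def z0_def by (rule act_word_path[OF q]) simp
  have vz: "valid_state z" using valid_state_act_word[OF path_word_gens[OF q] vz0[folded z0_def] act] .
  have finX: "finite (fsupp X)"
    unfolding X_def by (intro finite_fsupp_fsum[OF Q] finite_subset[OF fsupp_fsmult])
      (simp add: path_elt_eq_mono fsupp_mono)
  have fin_uq: "finite (fsupp (fmult u (path_elt q)))"
    using free_elem_fmult[OF u free_elem_path[OF q]] unfolding free_elem_def by simp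
  have coeff: "rep_coeff u y z = (\<Sum>p\<in>Q. \<mu> p * of_bool (path_state p z0 = y))" for y
  proof -
    have "rep_coeff u y z = rep_coeff (fmult u (path_elt q)) y z0"
      using u act by (simp add: path_elt_eq_mono rep_coeff_fmult_mono_right free_elem_def)
    also have "\<dots> = rep_coeff X y z0"
      using lpa_eq_rep_coeff[OF fin_uq finX eq[folded X_def] vz0[folded z0_def]] .
    also have "\<dots> = (\<Sum>p\<in>Q. \<mu> p * of_bool (path_state p z0 = y))"
      unfolding X_def using QR by (intro rep_coeff_path_combination[OF Q]) (simp add: z0_def)
    finally show ?thesis .
  qed
  let ?T = "{t. \<exists>w\<in>fsupp u. act_word w z = Some t}"
  have "finite ?T"
    by (rule finite_subset[of _ "(\<lambda>w. the (act_word w z)) ` fsupp u"])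
      (use u in \<open>force simp: free_elem_def\<close>)+
  moreover have "inj_on (\<lambda>p. path_state p z0) Q"
    by (rule inj_onI) (rule path_state_inj)
  moreover have "rep_coeff u t z = 0" if "t \<notin> ?T" for t
    unfolding rep_coeff_def by (rule sum.neutral) (use that in auto)
  ultimately have "(\<Sum>t\<in>?T. (cmod (rep_coeff u t z))\<^sup>2) = (\<Sum>p\<in>Q. (cmod (\<mu> p))\<^sup>2)"
    by (rule sum_norm_reindex[OF _ Q _ _ coeff])
  then show ?thesis using unitary_rep_coeff_norm[OF u unitary vz] by simp
qed

lemma unitary_times_path:
  assumes ess: "ess_unique_partition_of_unit R"
    and u: "free_elem u" and unitary: "fmult (fstar u) u \<approx> lpa_one E0"
    and q: "q \<in> paths E0 E1 r s"
    and ghosts: "\<And>w. w \<in> fsupp u \<Longrightarrow> ghost_count w \<le> path_len q \<or> sink (path_range q)"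
  shows "\<exists>c p. p \<in> paths E0 E1 r s \<and> c \<in> R \<and> cmod c = 1 \<and> fmult u (path_elt q) \<approx> fsmult c (path_elt p)"
proof -
  obtain Q \<mu> where Q: "finite Q" "\<And>p. p \<in> Q \<Longrightarrow> p \<in> paths E0 E1 r s \<and> path_range p = path_range q"
    and R: "\<And>p. \<mu> p \<in> R" and eq: "fmult u (path_elt q) \<approx> fsum (\<lambda>p. fsmult (\<mu> p) (path_elt p)) Q"
    using free_elem_times_path[OF u q ghosts] by blast
  obtain p0 where p0: "p0 \<in> Q" "cmod (\<mu> p0) = 1" and zero: "\<And>p. p \<in> Q \<Longrightarrow> p \<noteq> p0 \<Longrightarrow> \<mu> p = 0"
    using ess_unique_partition_of_unitE[OF ess Q(1) R path_combination_norm[OF u unitary q Q eq]]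
    by blast
  have "fsum (\<lambda>p. fsmult (\<mu> p) (path_elt p)) Q = fsmult (\<mu> p0) (path_elt p0)"
  proof (subst fsum_delta[OF p0(1) Q(1), symmetric], rule fsum_cong)
    fix p assume "p \<in> Q"
    then show "fsmult (\<mu> p) (path_elt p) = (if p = p0 then fsmult (\<mu> p0) (path_elt p0) else Z)"
      using zero by (auto simp: fsmult_def)
  qed
  then show ?thesis
    using eq Q(2)[OF p0(1)] R p0(2) by (intro exI[of _ "\<mu> p0"] exI[of _ p0]) simp
qed

end

lemma fmult_fstar_fsmult_unimodular:
  assumes "cmod c = 1"
  shows "fmult (fsmult c a) (fstar (fsmult c a)) = fmult a (fstar a)"
proof -
  have "cnj c * c = 1" using complex_norm_square[of c] assms by (simp add: mult.commute)
  then show ?thesis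
    unfolding fstar_fsmult fmult_fsmult_left fmult_fsmult_right
    by (simp add: fsmult_def mult.assoc[symmetric])
qed

context leavitt
begin

lemma unitary_frontier_expansion:
  assumes u: "free_elem u" "u [] = 0"
    and eq: "\<And>b. b \<in> frontier N \<Longrightarrow> fmult u (path_elt b) \<approx> fsmult (c b) (path_elt (\<alpha> b))"
  shows "u \<approx> fsum (\<lambda>b. fsmult (c b) (fmult (path_elt (\<alpha> b)) (fstar (path_elt b)))) (frontier N)"
proof -
  have fin: "finite (fsupp u)" using u unfolding free_elem_def by simp
  have "u \<approx> fmult u (lpa_one E0)" by (rule lpa_eq_sym[OF fmult_lpa_one_right[OF u]])
  also have "\<dots> \<approx> fmult u (fsum path_proj (frontier N))"
    by (rule lpa_eq_fmult_left[OF u(1) lpa_eq_sym[OF frontier_partition_of_unit]])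
  also have "\<dots> = fsum (\<lambda>b. fmult (fmult u (path_elt b)) (fstar (path_elt b))) (frontier N)"
    unfolding fmult_fsum_right path_proj_def fmult_assoc[OF fin] ..
  also have "\<dots> \<approx> fsum (\<lambda>b. fsmult (c b) (fmult (path_elt (\<alpha> b)) (fstar (path_elt b)))) (frontier N)"
  proof (rule lpa_eq_fsum[OF finite_frontier])
    fix b assume b: "b \<in> frontier N"
    show "fmult (fmult u (path_elt b)) (fstar (path_elt b)) \<approx>
        fsmult (c b) (fmult (path_elt (\<alpha> b)) (fstar (path_elt b)))"
      using lpa_eq_fmult_right[OF free_elem_fstar[OF free_elem_path] eq[OF b]] frontier_paths[OF b]
      by (simp add: fmult_fsmult_left)
  qed
  finally show ?thesis .
qed

text \<open>\<open>\<Sum> \<alpha>\<^sub>b \<alpha>\<^sub>b\<^sup>* = \<Sum> u b b\<^sup>* u\<^sup>* = u u\<^sup>* = 1\<close>.\<close>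

lemma unitary_frontier_range_partition:
  assumes u: "free_elem u" "u [] = 0" and unitary: "fmult u (fstar u) \<approx> lpa_one E0"
    and \<alpha>: "\<And>b. b \<in> frontier N \<Longrightarrow> \<alpha> b \<in> paths E0 E1 r s"
    and c: "\<And>b. b \<in> frontier N \<Longrightarrow> c b \<in> R \<and> cmod (c b) = 1"
    and eq: "\<And>b. b \<in> frontier N \<Longrightarrow> fmult u (path_elt b) \<approx> fsmult (c b) (path_elt (\<alpha> b))"
  shows "fsum (\<lambda>b. path_proj (\<alpha> b)) (frontier N) \<approx> lpa_one E0"
proof -
  have fin: "finite (fsupp u)" using u unfolding free_elem_def by simp
  have u_star: "free_elem (fstar u)" using free_elem_fstar[OF u(1)] .
  have "path_proj (\<alpha> b) \<approx> fmult (fmult u (path_proj b)) (fstar u)" if b: "b \<in> frontier N" for b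
  proof -
    define Y where "Y = fmult u (path_elt b)"
    define W where "W = fsmult (c b) (path_elt (\<alpha> b))"
    have free: "free_elem Y" "free_elem W"
      unfolding Y_def W_def using u(1) \<alpha>[OF b] c[OF b] frontier_paths[OF b]
      by (simp_all add: free_elem_fmult free_elem_path free_elem_fsmult)
    have "path_proj (\<alpha> b) = fmult W (fstar W)"
      unfolding path_proj_def W_def using c[OF b] by (simp add: fmult_fstar_fsmult_unimodular)
    also have "\<dots> \<approx> fmult Y (fstar W)"
      by (rule lpa_eq_fmult_right[OF free_elem_fstar[OF free(2)] lpa_eq_sym[OF eq[OF b, folded Y_def W_def]]])
    also have "\<dots> \<approx> fmult Y (fstar Y)"
      by (rule lpa_eq_fmult_left[OF free(1) lpa_eq_fstar[OF lpa_eq_sym[OF eq[OF b, folded Y_def W_def]]]])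
    also have "fmult Y (fstar Y) = fmult (fmult u (path_proj b)) (fstar u)"
    proof -
      have "finite (fsupp Y)" using free(1) unfolding free_elem_def by simp
      then have "fmult Y (fstar Y) = fmult (fmult Y (fstar (path_elt b))) (fstar u)"
        unfolding Y_def fstar_fmult by (rule fmult_assoc[symmetric])
      also have "fmult Y (fstar (path_elt b)) = fmult u (path_proj b)"
        unfolding Y_def path_proj_def by (rule fmult_assoc[OF fin])
      finally show ?thesis .
    qed
    finally show ?thesis .
  qed
  then have "fsum (\<lambda>b. path_proj (\<alpha> b)) (frontier N) \<approx>
      fsum (\<lambda>b. fmult (fmult u (path_proj b)) (fstar u)) (frontier N)"
    by (rule lpa_eq_fsum[OF finite_frontier])
  also have "\<dots> = fmult (fmult u (fsum path_proj (frontier N))) (fstar u)"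
    by (simp add: fmult_fsum_left fmult_fsum_right)
  also have "\<dots> \<approx> fmult (fmult u (lpa_one E0)) (fstar u)"
    by (rule lpa_eq_fmult_right[OF u_star lpa_eq_fmult_left[OF u(1) frontier_partition_of_unit]])
  also have "\<dots> \<approx> fmult u (fstar u)"
    by (rule lpa_eq_fmult_right[OF u_star fmult_lpa_one_right[OF u]])
  also have "\<dots> \<approx> lpa_one E0" by (rule unitary)
  finally show ?thesis .
qed

end

theorem proposition4p4:
  fixes R :: "complex set" and E0 :: "'v set" and E1 :: "'e set"
    and r s :: "'e \<Rightarrow> 'v" and u :: "('v,'e) fa"
  assumes "finite_graph E0 E1 r s"
    and "conj_subring R"
    and "ess_unique_partition_of_unit R"
    and "u \<in> free_alg R E0 E1"
    and "lpa_eq R E0 E1 r s (fmult u (fstar u)) (lpa_one E0)"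
    and "lpa_eq R E0 E1 r s (fmult (fstar u) u) (lpa_one E0)"
  shows "\<exists>(n::nat) (\<alpha>::nat \<Rightarrow> ('v,'e) path) (\<beta>::nat \<Rightarrow> ('v,'e) path) (c::nat \<Rightarrow> complex).
           (\<forall>i<n. \<alpha> i \<in> paths E0 E1 r s \<and> \<beta> i \<in> paths E0 E1 r s \<and> c i \<in> R \<and> cmod (c i) = 1) \<and>
           lpa_eq R E0 E1 r s u
             (fsum (\<lambda>i. fsmult (c i) (fmult (path_elt (\<alpha> i)) (fstar (path_elt (\<beta> i))))) {..<n}) \<and>
           lpa_eq R E0 E1 r s (fsum (\<lambda>i. fmult (path_elt (\<alpha> i)) (fstar (path_elt (\<alpha> i)))) {..<n})
             (lpa_one E0) \<and>
           lpa_eq R E0 E1 r s (fsum (\<lambda>i. fmult (path_elt (\<beta> i)) (fstar (path_elt (\<beta> i)))) {..<n})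
             (lpa_one E0)"
proof -
  interpret leavitt R E0 E1 r s using assms(1,2) by unfold_locales
  have u: "free_elem u" "u [] = 0" using assms(4) unfolding free_alg_def free_elem_def fsupp_def by auto
  define N where "N = (\<Sum>w\<in>fsupp u. length w)"
  have "ghost_count w \<le> path_len b \<or> sink (path_range b)" if "w \<in> fsupp u" "b \<in> frontier N" for w b
    using that ghost_count_le_length[of w] member_le_sum[of w "fsupp u" length] u(1)
    by (fastforce simp: N_def frontier_def free_elem_def)
  then obtain c \<alpha> where F: "\<And>b. b \<in> frontier N \<Longrightarrow> \<alpha> b \<in> paths E0 E1 r s \<and> c b \<in> R \<and>
      cmod (c b) = 1 \<and> fmult u (path_elt b) \<approx> fsmult (c b) (path_elt (\<alpha> b))"
    using unitary_times_path[OF assms(3) u(1) assms(6) frontier_paths] by metis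
  obtain h where h: "bij_betw h {..<card (frontier N)} (frontier N)"
    using ex_bij_betw_nat_finite[OF finite_frontier] by (auto simp: atLeast0LessThan)
  have hN: "h i \<in> frontier N" if "i < card (frontier N)" for i
    using h that unfolding bij_betw_def by auto
  note expansion = unitary_frontier_expansion[OF u, of N c \<alpha>]
    and alpha_partition = unitary_frontier_range_partition[OF u assms(5), of N \<alpha> c]
    and beta_partition = frontier_partition_of_unit[of N]
  show ?thesis
    by (rule exI[of _ "card (frontier N)"], rule exI[of _ "\<alpha> \<circ> h"], rule exI[of _ h],
        rule exI[of _ "c \<circ> h"])
      (use hN frontier_paths[OF hN] F expansion alpha_partition beta_partition in
        \<open>simp add: path_proj_def fsum_reindex_bij_betw[OF h, symmetric]\<close>)
qed
end
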